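(* Let $N\ge5$ and $2\le d\le N-2$. Then $\Lambda_{N,d}$ equals the set of $\lambda\in\mathbb{R}^{d\times(N+1)}$ satisfying (C1)–(C7) with the four inequalities $\lambda_{2,2}\le\lambda_{1,1}$, $\lambda_{1,1}\le\lambda_{1,2}$, $\lambda_{d,N-2}\le\lambda_{d,N-1}$, $\lambda_{d,N-1}\le\lambda_{d-1,N-2}$ removed; the equations (C1)–(C3) are linearly independent and cut out the affine hull of $\Lambda_{N,d}$, and each of the remaining inequalities is irredundant, i.e. the resulting system is non-redundant and its inequalities are in bijection with the facets of $\Lambda_{N,d}$.
   Context: Conditions on $\lambda\in\mathbb{R}^{d\times(N+1)}$ (rows $1\le i\le d$, columns $0\le n\le N$): (C1) $\lambda_{i,n}=0$ whenever $i>n$; (C2) $\lambda_{i,n}=N$ whenever $i<n+d-N+1$; (C3) $\sum_{i=1}^d\lambda_{i,n}=dn$ for $0<n<N$; (C4) $\lambda_{i,n}\le\lambda_{i,n+1}$ for $1\le i\le d$, $i\le n<N-d+i-1$; (C5) $\lambda_{i,n}\le\lambda_{i-1,n-1}$ for $1<i\le d$, $i\le n<N-d+i$; (C6) $\lambda_{d,d}\ge0$; (C7) $\lambda_{1,N-d}\le N$. $\Lambda_{N,d}\subseteq\mathbb{R}^{d\times(N+1)}$ is the set of real matrices satisfying $\lambda_{i,0}=0$ and $\lambda_{i,N}=N$ for all $i$, $\sum_{i=1}^d\lambda_{i,n}=dn$ for $0\le n\le N$, $\lambda_{i,n}\le\lambda_{i,n+1}$ for $1\le i\le d$, $0\le n<N$,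 and $\lambda_{i,n}\le\lambda_{i-1,n-1}$ for $1<i\le d$, $0<n\le N$. *)

theory Defs
  imports "HOL-Analysis.Analysis"
begin

text \<open>A real d x (N+1) matrix (rows 1..d, columns 0..N) is represented by a function
  x :: nat => nat => real (x i n = entry in row i, column n) that vanishes outside the
  index set {1..d} x {0..N}.\<close>

type_synonym mat = "nat \<Rightarrow> nat \<Rightarrow> real"

definition idx :: "nat \<Rightarrow> nat \<Rightarrow> (nat \<times> nat) set" where
  "idx N d = {1..d} \<times> {0..N}"

definition mat_space :: "nat \<Rightarrow> nat \<Rightarrow> mat set" where
  "mat_space N d = {x. \<forall>i n. (i, n) \<notin> idx N d \<longrightarrow> x i n = 0}"

definition Lambda :: "nat \<Rightarrow> nat \<Rightarrow> mat set" where
  "Lambda N d = {x \<in> mat_space N d.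
      (\<forall>i\<in>{1..d}. x i 0 = 0 \<and> x i N = real N)
    \<and> (\<forall>n\<in>{0..N}. (\<Sum>i=1..d. x i n) = real d * real n)
    \<and> (\<forall>i\<in>{1..d}. \<forall>n. n < N \<longrightarrow> x i n \<le> x i (n+1))
    \<and> (\<forall>i. 1 < i \<and> i \<le> d \<longrightarrow> (\<forall>n. 0 < n \<and> n \<le> N \<longrightarrow> x i n \<le> x (i-1) (n-1)))}"

text \<open>Labels of the equations (C1), (C2), (C3).  Conditions like i < n + d - N + 1
  are written without subtraction as i + N < n + d + 1.\<close>
datatype eq_label = E1 nat nat | E2 nat nat | E3 nat

definition eq_idx :: "nat \<Rightarrow> nat \<Rightarrow> eq_label set" where
  "eq_idx N d =
     {E1 i n | i n. 1 \<le> i \<and> i \<le> d \<and> n \<le> N \<and> i > n}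
   \<union> {E2 i n | i n. 1 \<le> i \<and> i \<le> d \<and> n \<le> N \<and> i + N < n + d + 1}
   \<union> {E3 n | n. 0 < n \<and> n < N}"

fun eq_holds :: "nat \<Rightarrow> nat \<Rightarrow> eq_label \<Rightarrow> mat \<Rightarrow> bool" where
  "eq_holds N d (E1 i n) x = (x i n = 0)"
| "eq_holds N d (E2 i n) x = (x i n = real N)"
| "eq_holds N d (E3 n) x = ((\<Sum>i=1..d. x i n) = real d * real n)"

fun eq_coeff :: "nat \<Rightarrow> nat \<Rightarrow> eq_label \<Rightarrow> mat" where
  "eq_coeff N d (E1 i n) = (\<lambda>j m. if (j, m) = (i, n) then 1 else 0)"
| "eq_coeff N d (E2 i n) = (\<lambda>j m. if (j, m) = (i, n) then 1 else 0)"
| "eq_coeff N d (E3 n) = (\<lambda>j m. if 1 \<le> j \<and> j \<le> d \<and> m = n then 1 else 0)"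

definition eqs_lin_indep :: "nat \<Rightarrow> nat \<Rightarrow> bool" where
  "eqs_lin_indep N d \<longleftrightarrow>
     (\<forall>c :: eq_label \<Rightarrow> real.
        (\<forall>i n. (\<Sum>e\<in>eq_idx N d. c e * eq_coeff N d e i n) = 0) \<longrightarrow> (\<forall>e\<in>eq_idx N d. c e = 0))"

text \<open>Labels of the inequalities of the reduced system: (C4) and (C5) without the four
  removed inequalities, and (C6), (C7).\<close>
datatype ineq_label = I4 nat nat | I5 nat nat | I6 | I7

definition ineq_idx :: "nat \<Rightarrow> nat \<Rightarrow> ineq_label set" where
  "ineq_idx N d =
     {I4 i n | i n. 1 \<le> i \<and> i \<le> d \<and> i \<le> n \<and> n + d + 1 < N + i
                 \<and> (i, n) \<noteq> (1, 1) \<and> (i, n) \<noteq> (d, N - 2)}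
   \<union> {I5 i n | i n. 1 < i \<and> i \<le> d \<and> i \<le> n \<and> n + d < N + i
                 \<and> (i, n) \<noteq> (2, 2) \<and> (i, n) \<noteq> (d, N - 1)}
   \<union> {I6, I7}"

fun ineq_holds :: "nat \<Rightarrow> nat \<Rightarrow> ineq_label \<Rightarrow> mat \<Rightarrow> bool" where
  "ineq_holds N d (I4 i n) x = (x i n \<le> x i (n+1))"
| "ineq_holds N d (I5 i n) x = (x i n \<le> x (i-1) (n-1))"
| "ineq_holds N d I6 x = (x d d \<ge> 0)"
| "ineq_holds N d I7 x = (x 1 (N - d) \<le> real N)"

fun ineq_tight :: "nat \<Rightarrow> nat \<Rightarrow> ineq_label \<Rightarrow> mat \<Rightarrow> bool" where
  "ineq_tight N d (I4 i n) x = (x i n = x i (n+1))"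
| "ineq_tight N d (I5 i n) x = (x i n = x (i-1) (n-1))"
| "ineq_tight N d I6 x = (x d d = 0)"
| "ineq_tight N d I7 x = (x 1 (N - d) = real N)"

definition reduced_system :: "nat \<Rightarrow> nat \<Rightarrow> mat set" where
  "reduced_system N d = {x \<in> mat_space N d.
      (\<forall>e\<in>eq_idx N d. eq_holds N d e x) \<and> (\<forall>l\<in>ineq_idx N d. ineq_holds N d l x)}"

definition mat_affine_hull :: "mat set \<Rightarrow> mat set" where
  "mat_affine_hull S = {x. \<exists>T u. finite T \<and> T \<noteq> {} \<and> T \<subseteq> S \<and> sum u T = 1
       \<and> (\<forall>i n. x i n = (\<Sum>y\<in>T. u y * y i n))}"

definition mat_aff_indep :: "mat set \<Rightarrow> bool" where
  "mat_aff_indep T \<longleftrightarrow> finite T \<and>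
     (\<forall>u. sum u T = 0 \<and> (\<forall>i n. (\<Sum>y\<in>T. u y * y i n) = 0) \<longrightarrow> (\<forall>y\<in>T. u y = 0))"

definition mat_aff_dim :: "mat set \<Rightarrow> int" where
  "mat_aff_dim S = int (Max {card T | T. T \<subseteq> S \<and> mat_aff_indep T}) - 1"

definition mat_face_of :: "nat \<Rightarrow> nat \<Rightarrow> mat set \<Rightarrow> mat set \<Rightarrow> bool" where
  "mat_face_of N d F P \<longleftrightarrow> (\<exists>(a::mat) (b::real).
      (\<forall>x\<in>P. (\<Sum>(i,n)\<in>idx N d. a i n * x i n) \<le> b)
    \<and> F = {x\<in>P. (\<Sum>(i,n)\<in>idx N d. a i n * x i n) = b})"

definition mat_facet_of :: "nat \<Rightarrow> nat \<Rightarrow> mat set \<Rightarrow> mat set \<Rightarrow> bool" where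
  "mat_facet_of N d F P \<longleftrightarrow> mat_face_of N d F P \<and> F \<noteq> {} \<and> mat_aff_dim F = mat_aff_dim P - 1"

end

theory Submission
  imports Defs "HOL-Library.Function_Algebras"
begin

text \<open>
  Let A be the affine space cut out by (C1)--(C3).  On A the column sums fix
  x(1,1) = d and x(d,N-1) = N-d, and the sum of the two undetermined entries of columns 2 and
  N-2; with the kept inequalities this implies the four removed ones.  Chains of kept
  inequalities starting at the corners (d,d) and (1,N-d) bound every undetermined entry
  between 0 and N, which yields the remaining conditions defining Lambda.

  The point with entries n + d + 1 - 2i in the undetermined positions has slack exactly 1 in
  every kept inequality, so Lambda is full-dimensional in A.  For each kept inequality a move
  of this point inside A (a column-balanced exchange of at most four unit entries, or a tilt
  of all columns for (C6) and (C7)) makes that inequality tight while every other one keeps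
  slack at least 1/2.  Such a point shows irredundancy, and its neighbourhood in the
  hyperplane shows that the face of the inequality has codimension one.  Conversely a facet
  lies in the face of some inequality, since otherwise an average of facet points would be
  slack everywhere; comparing dimensions, the facet is that face.
\<close>

section \<open>Affine dimension of sets of matrices\<close>

definition mat_scale :: "real \<Rightarrow> mat \<Rightarrow> mat" where
  "mat_scale r x = (\<lambda>i n. r * x i n)"

lemma mat_scale_apply [simp]: "mat_scale r x i n = r * x i n"
  by (simp add: mat_scale_def)

interpretation matv: vector_space mat_scale
  by unfold_locales (auto simp: fun_eq_iff algebra_simps mat_scale_def)

lemma sum_mat_apply: "(sum f S) i n = (\<Sum>v\<in>S. f v i n)" for f :: "'a \<Rightarrow> mat"
  by (induction S rule: infinite_finite_induct) auto

lemma aff_indep_differences_independent: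
  assumes T: "mat_aff_indep T" and y0: "y0 \<in> T"
  shows "matv.independent ((\<lambda>y. y - y0) ` (T - {y0}))"
  unfolding matv.independent_explicit_finite_subsets
proof (intro allI impI ballI)
  let ?g = "\<lambda>y. y - y0"
  have finT: "finite T" using T by (simp add: mat_aff_indep_def)
  fix S u v
  assume S: "S \<subseteq> ?g ` (T - {y0})" "finite S" and su: "(\<Sum>v\<in>S. mat_scale (u v) v) = 0"
    and v: "v \<in> S"
  define S0 where "S0 = {y\<in>T - {y0}. ?g y \<in> S}"
  have S0sub: "S0 \<subseteq> T - {y0}" by (auto simp: S0_def)
  have SS0: "S = ?g ` S0" using S by (auto simp: S0_def)
  have injS0: "inj_on ?g S0" by (auto simp: inj_on_def)
  \<comment> \<open>the coefficients of the affine dependency among \<open>T\<close> induced by \<open>u\<close>\<close>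
  define w where "w y = (if y \<in> S0 then u (?g y) else if y = y0 then - (\<Sum>z\<in>S0. u (?g z)) else 0)"
    for y
  have w_sum: "(\<Sum>y\<in>T. w y * f y) = w y0 * f y0 + (\<Sum>y\<in>S0. u (?g y) * f y)" for f :: "mat \<Rightarrow> real"
  proof -
    have "(\<Sum>y\<in>T. w y * f y) = w y0 * f y0 + (\<Sum>y\<in>T - {y0}. w y * f y)"
      using finT y0 by (simp add: sum.remove)
    also have "(\<Sum>y\<in>T - {y0}. w y * f y) = (\<Sum>y\<in>S0. w y * f y)"
      using finT S0sub by (intro sum.mono_neutral_right) (auto simp: w_def)
    also have "\<dots> = (\<Sum>y\<in>S0. u (?g y) * f y)" by (intro sum.cong) (auto simp: w_def)
    finally show ?thesis .
  qed
  have w0: "w y0 = - (\<Sum>z\<in>S0. u (?g z))" by (simp add: w_def S0_def)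
  have "sum w T = 0" using w_sum[of "\<lambda>_. 1"] w0 by simp
  moreover have "(\<Sum>y\<in>T. w y * y i n) = 0" for i n
  proof -
    have "(\<Sum>y\<in>T. w y * y i n) = (\<Sum>y\<in>S0. u (?g y) * y i n) - (\<Sum>y\<in>S0. u (?g y)) * y0 i n"
      using w_sum w0 by simp
    also have "\<dots> = (\<Sum>y\<in>S0. u (?g y) * ?g y i n)"
      by (simp add: sum_distrib_right right_diff_distrib sum_subtractf)
    also have "\<dots> = (\<Sum>v\<in>S. mat_scale (u v) v) i n"
      unfolding SS0 by (simp add: sum.reindex[OF injS0] sum_mat_apply)
    finally show ?thesis using su by simp
  qed
  ultimately have "\<forall>y\<in>T. w y = 0" using T unfolding mat_aff_indep_def by blast
  moreover obtain y where "y \<in> S0" "v = ?g y" using v SS0 by auto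
  ultimately show "u v = 0" using S0sub by (force simp: w_def)
qed

lemma card_aff_indep_le:
  assumes fin: "finite B" and T: "mat_aff_indep T" and sub: "\<forall>y\<in>T. y - q \<in> matv.span B"
  shows "card T \<le> card B + 1"
proof (cases "T = {}")
  case False
  then obtain y0 where y0: "y0 \<in> T" by auto
  define V where "V = (\<lambda>y. y - y0) ` (T - {y0})"
  have "inj_on (\<lambda>y. y - y0) (T - {y0})" by (auto simp: inj_on_def)
  then have "card V = card T - 1"
    using T y0 by (simp add: V_def card_image mat_aff_indep_def)
  moreover have "V \<subseteq> matv.span B"
  proof
    fix v assume "v \<in> V"
    then obtain y where y: "y \<in> T" "v = y - y0" by (auto simp: V_def)
    have "(y - q) - (y0 - q) \<in> matv.span B" by (rule matv.span_diff) (use sub y y0 in auto)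
    then show "v \<in> matv.span B" using y by simp
  qed
  then have "card V \<le> card B"
    using matv.independent_span_bound[OF fin aff_indep_differences_independent[OF T y0]]
    by (simp add: V_def)
  ultimately show ?thesis by simp
qed simp

lemma aff_indep_translated_basis:
  assumes B: "matv.independent B" "finite B" and e: "e \<noteq> 0"
  shows "mat_aff_indep (insert q ((\<lambda>b. q + mat_scale e b) ` B))"
    and "card (insert q ((\<lambda>b. q + mat_scale e b) ` B)) = card B + 1"
proof -
  define h where "h = (\<lambda>b. q + mat_scale e b)"
  have B0: "0 \<notin> B" using B(1) matv.dependent_zero by blast
  have qn: "q \<notin> h ` B"
  proof
    assume "q \<in> h ` B"
    then obtain b where b: "b \<in> B" "q = q + mat_scale e b" by (auto simp: h_def)
    then have "b = 0" using e by (auto simp: fun_eq_iff)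
    then show False using b B0 by simp
  qed
  have inj: "inj_on h B" using e by (auto simp: inj_on_def h_def fun_eq_iff)
  have "card (insert q (h ` B)) = card B + 1"
    using qn inj B(2) card_image[OF inj] by simp
  then show "card (insert q ((\<lambda>b. q + mat_scale e b) ` B)) = card B + 1" by (simp only: h_def)
  have key: "(\<Sum>y\<in>insert q (h ` B). u y * f y) = u q * f q + (\<Sum>b\<in>B. u (h b) * f (h b))" for u f
  proof -
    have "(\<Sum>y\<in>insert q (h ` B). u y * f y) = u q * f q + (\<Sum>y\<in>h ` B. u y * f y)"
      using qn B(2) by (simp add: sum.insert)
    also have "(\<Sum>y\<in>h ` B. u y * f y) = (\<Sum>b\<in>B. u (h b) * f (h b))"
      using sum.reindex[OF inj, of "\<lambda>y. u y * f y"] by simp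
    finally show ?thesis .
  qed
  have "mat_aff_indep (insert q (h ` B))"
    unfolding mat_aff_indep_def
  proof (intro conjI allI impI)
    show "finite (insert q (h ` B))" using B(2) by simp
    fix u assume u: "sum u (insert q (h ` B)) = 0 \<and> (\<forall>i n. (\<Sum>y\<in>insert q (h ` B). u y * y i n) = 0)"
    have "sum u (insert q (h ` B)) = u q + (\<Sum>b\<in>B. u (h b))" using key[of u "\<lambda>_. 1"] by simp
    then have uq: "u q = - (\<Sum>b\<in>B. u (h b))" using u by simp
    have z: "(\<Sum>b\<in>B. u (h b) * b i n) = 0" for i n
    proof -
      have "0 = u q * q i n + (\<Sum>b\<in>B. u (h b) * h b i n)"
        using u key[of u "\<lambda>y. y i n"] by simp
      also have "(\<Sum>b\<in>B. u (h b) * h b i n) = (\<Sum>b\<in>B. u (h b) * q i n + e * (u (h b) * b i n))"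
        by (rule sum.cong) (simp_all add: h_def distrib_left)
      also have "\<dots> = (\<Sum>b\<in>B. u (h b)) * q i n + e * (\<Sum>b\<in>B. u (h b) * b i n)"
        by (simp add: sum.distrib sum_distrib_right sum_distrib_left)
      finally have "0 = e * (\<Sum>b\<in>B. u (h b) * b i n)" using uq by simp
      then show ?thesis using e by simp
    qed
    have zs: "(\<Sum>b\<in>B. mat_scale (u (h b)) b) = 0" using z by (simp add: fun_eq_iff sum_mat_apply)
    have I: "\<And>S w. S \<subseteq> B \<Longrightarrow> finite S \<Longrightarrow> (\<Sum>v\<in>S. mat_scale (w v) v) = 0 \<Longrightarrow> \<forall>v\<in>S. w v = 0"
      using B(1) unfolding matv.independent_explicit_finite_subsets by blast
    have hb: "\<forall>b\<in>B. u (h b) = 0" using I[of B "\<lambda>b. u (h b)"] B(2) zs by simp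
    then have "u q = 0" using uq by simp
    then show "\<forall>y\<in>insert q (h ` B). u y = 0" using hb by auto
  qed
  then show "mat_aff_indep (insert q ((\<lambda>b. q + mat_scale e b) ` B))" by (simp only: h_def)
qed

definition finite_basis :: "mat set \<Rightarrow> mat set \<Rightarrow> bool" where
  "finite_basis B U \<longleftrightarrow> finite B \<and> B \<subseteq> U \<and> matv.independent B \<and> U \<subseteq> matv.span B"

lemma mat_aff_dim_eqI:
  assumes B: "finite_basis B U" and sub: "\<forall>y\<in>S. y - q \<in> U"
    and q: "q \<in> S" and e: "e \<noteq> 0" and qb: "\<forall>b\<in>B. q + mat_scale e b \<in> S"
  shows "mat_aff_dim S = int (card B)"
proof -
  have fin: "finite B" and ind: "matv.independent B" and span: "\<forall>y\<in>S. y - q \<in> matv.span B"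
    using B sub by (auto simp: finite_basis_def)
  define C where "C = {card T |T. T \<subseteq> S \<and> mat_aff_indep T}"
  have ub: "c \<le> card B + 1" if "c \<in> C" for c
    using that card_aff_indep_le[OF fin _ , of _ q] span by (auto simp: C_def)
  then have "finite C" by (meson finite_nat_set_iff_bounded_le)
  have "card B + 1 \<in> C"
    using aff_indep_translated_basis[OF ind fin e, of q] q qb unfolding C_def
    by (intro CollectI exI[of _ "insert q ((\<lambda>b. q + mat_scale e b) ` B)"]) auto
  then have "Max C = card B + 1" using ub \<open>finite C\<close> by (intro Max_eqI) auto
  then show ?thesis unfolding mat_aff_dim_def C_def[symmetric] by simp
qed

lemma mat_aff_dim_le:
  assumes B: "finite_basis B U" and sub: "\<forall>y\<in>S. y - q \<in> U" and ne: "S \<noteq> {}"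
  shows "mat_aff_dim S \<le> int (card B)"
proof -
  have fin: "finite B" and span: "\<forall>y\<in>S. y - q \<in> matv.span B"
    using B sub by (auto simp: finite_basis_def)
  define C where "C = {card T |T. T \<subseteq> S \<and> mat_aff_indep T}"
  have ub: "c \<le> card B + 1" if "c \<in> C" for c
    using that card_aff_indep_le[OF fin _ , of _ q] span by (auto simp: C_def)
  then have "finite C" by (meson finite_nat_set_iff_bounded_le)
  obtain y where "y \<in> S" using ne by auto
  moreover have "mat_aff_indep {y}" by (simp add: mat_aff_indep_def)
  ultimately have "1 \<in> C" unfolding C_def by force
  then have "Max C \<le> card B + 1" using ub \<open>finite C\<close> by (intro Max.boundedI) auto
  then show ?thesis unfolding mat_aff_dim_def C_def[symmetric] by simp
qed

lemma (in vector_space) kernel_basis: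
  assumes U: "subspace U" and B: "B \<subseteq> U" "independent B" "U \<subseteq> span B" "finite B"
    and f_add: "\<And>x y. f (x + y) = f x + f y" and f_scale: "\<And>c x. f (scale c x) = c * f x"
    and u: "u \<in> U" "f u \<noteq> 0"
  obtains B' where "B' \<subseteq> U \<inter> {v. f v = 0}" "independent B'" "U \<inter> {v. f v = 0} \<subseteq> span B'"
    "finite B'" "card B' + 1 = card B"
proof -
  define V where "V = U \<inter> {v. f v = 0}"
  have f_diff: "f (x - y) = f x - f y" for x y
    using f_add[of "x - y" y] by simp
  have "subspace V"
    using U f_scale[of 0 0] f_add f_scale unfolding subspace_def V_def by auto
  obtain B' where B': "B' \<subseteq> V" "independent B'" "V \<subseteq> span B'"
    using maximal_independent_subset[of V] by blast
  have "finite B'"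
    using independent_span_bound[OF B(4) B'(2)] B' B(3) by (auto simp: V_def)
  have u_notin: "u \<notin> span B'"
    using span_minimal[OF B'(1) \<open>subspace V\<close>] u by (auto simp: V_def)
  have ind: "independent (insert u B')" using independent_insertI[OF u_notin B'(2)] .
  have "insert u B' \<subseteq> span B" using B' u B(3) by (auto simp: V_def)
  then have le: "card (insert u B') \<le> card B" using independent_span_bound[OF B(4) ind] by blast
  have "U \<subseteq> span (insert u B')"
  proof
    fix w assume w: "w \<in> U"
    have "w - scale (f w / f u) u \<in> U"
      using U w u unfolding subspace_def by (metis diff_conv_add_uminus scale_minus_left)
    moreover have "f (w - scale (f w / f u) u) = 0" using u by (simp add: f_diff f_scale)
    ultimately show "w \<in> span (insert u B')"
      using B'(3) span_breakdown_eq by (auto simp: V_def)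
  qed
  then have "card B \<le> card (insert u B')"
    using independent_span_bound[of "insert u B'" B] \<open>finite B'\<close> B(1,2) by auto
  moreover have "u \<notin> B'" using u_notin span_superset by blast
  ultimately show ?thesis
    using that[of B'] B' \<open>finite B'\<close> le by (auto simp: V_def)
qed

lemma subspace_kernel:
  assumes U: "matv.subspace U" and f_add: "\<And>x y. f (x + y) = f x + f y"
    and f_scale: "\<And>c x. f (mat_scale c x) = c * f x"
  shows "matv.subspace (U \<inter> {v. f v = 0})"
  using U f_scale[of 0 0] unfolding matv.subspace_def by (auto simp: f_add f_scale)

lemma finite_basis_kernel:
  assumes B: "finite_basis B U" and U: "matv.subspace U"
    and f_add: "\<And>x y. f (x + y) = f x + f y" and f_scale: "\<And>c x. f (mat_scale c x) = c * f x"
    and u: "u \<in> U" "f u \<noteq> 0"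
  shows "\<exists>B'. finite_basis B' (U \<inter> {v. f v = 0}) \<and> card B' + 1 = card B"
proof -
  obtain B' where "B' \<subseteq> U \<inter> {v. f v = 0}" "matv.independent B'"
    "U \<inter> {v. f v = 0} \<subseteq> matv.span B'" "finite B'" "card B' + 1 = card B"
    using matv.kernel_basis[OF U _ _ _ _ f_add f_scale u] B unfolding finite_basis_def by blast
  then show ?thesis unfolding finite_basis_def by blast
qed

lemma exists_small_extrapolation:
  fixes s r :: "'a \<Rightarrow> real"
  assumes fin: "finite I" and pos: "\<forall>j\<in>I. 0 < s j"
  shows "\<exists>t>0. \<forall>j\<in>I. 0 \<le> (1 + t) * s j - t * r j"
proof -
  define t where "t = Min (insert 1 ((\<lambda>j. s j / (1 + \<bar>r j\<bar>)) ` I))"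
  have t: "0 < t" using fin pos by (simp add: t_def)
  have "0 \<le> (1 + t) * s j - t * r j" if j: "j \<in> I" for j
  proof -
    have "t \<le> s j / (1 + \<bar>r j\<bar>)" using fin j by (simp add: t_def)
    then have "t + t * \<bar>r j\<bar> \<le> s j" by (simp add: pos_le_divide_eq add_pos_nonneg algebra_simps)
    moreover have "t * r j \<le> t * \<bar>r j\<bar>" using t by (simp add: mult_left_mono)
    ultimately have "t * r j \<le> s j" using t by linarith
    moreover have "0 \<le> t * s j" using t pos j by (simp add: less_imp_le)
    ultimately show ?thesis by (simp add: algebra_simps)
  qed
  then show ?thesis using t by blast
qed

section \<open>The affine space of the equations\<close>

text \<open>An entry is free if no equation among (C1), (C2) fixes it.\<close>

definition free_entry :: "nat \<Rightarrow> nat \<Rightarrow> nat \<Rightarrow> nat \<Rightarrow> bool" where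
  "free_entry N d i n \<longleftrightarrow> 1 \<le> i \<and> i \<le> d \<and> i \<le> n \<and> n + d < N + i"

definition eq_solutions :: "nat \<Rightarrow> nat \<Rightarrow> mat set" where
  "eq_solutions N d = {x \<in> mat_space N d. \<forall>e\<in>eq_idx N d. eq_holds N d e x}"

definition eq_directions :: "nat \<Rightarrow> nat \<Rightarrow> mat set" where
  "eq_directions N d = {v. (\<forall>i n. \<not> free_entry N d i n \<longrightarrow> v i n = 0)
     \<and> (\<forall>n. 0 < n \<and> n < N \<longrightarrow> (\<Sum>i=1..d. v i n) = 0)}"

definition unit_mat :: "nat \<times> nat \<Rightarrow> mat" where
  "unit_mat c = (\<lambda>i n. if (i, n) = c then 1 else 0)"

lemma free_entry_idx: "free_entry N d i n \<Longrightarrow> (i, n) \<in> idx N d"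
  by (auto simp: free_entry_def idx_def)

lemma sum_greaterThanAtMost_linear:
  "a \<le> b \<Longrightarrow> (\<Sum>i\<in>{a<..b}. c - 2 * real i) = real (b - a) * (c - real a - real b - 1)"
proof (induction b)
  case (Suc b)
  show ?case
  proof (cases "a = Suc b")
    case False
    then have ab: "a \<le> b" using Suc.prems by simp
    have "{a<..Suc b} = insert (Suc b) {a<..b}" using ab by auto
    then have "(\<Sum>i\<in>{a<..Suc b}. c - 2 * real i) = (c - 2 * real (Suc b)) + (\<Sum>i\<in>{a<..b}. c - 2 * real i)"
      by simp
    also have "\<dots> = real (Suc b - a) * (c - real a - real (Suc b) - 1)"
      using Suc.IH ab by (simp add: of_nat_diff Suc_diff_le algebra_simps)
    finally show ?thesis .
  qed simp
qed simp

lemma E1_mem: "E1 i n \<in> eq_idx N d \<longleftrightarrow> 1 \<le> i \<and> i \<le> d \<and> n \<le> N \<and> n < i"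
  by (auto simp: eq_idx_def)

lemma E2_mem: "E2 i n \<in> eq_idx N d \<longleftrightarrow> 1 \<le> i \<and> i \<le> d \<and> n \<le> N \<and> i + N < n + d + 1"
  by (auto simp: eq_idx_def)

lemma E3_mem: "E3 n \<in> eq_idx N d \<longleftrightarrow> 0 < n \<and> n < N"
  by (auto simp: eq_idx_def)

locale dims =
  fixes N d :: nat
  assumes N_ge: "5 \<le> N" and d_ge: "2 \<le> d" and d_le: "d \<le> N - 2"
begin

lemma sum_free_rows:
  "(\<Sum>i=1..d. if free_entry N d i n then f i else 0) = (\<Sum>i\<in>{n + d - N<..min n d}. f i)"
proof -
  have "{i\<in>{1..d}. free_entry N d i n} = {n + d - N<..min n d}"
    using d_le by (auto simp: free_entry_def)
  then show ?thesis by (simp add: sum.inter_filter[symmetric])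
qed

lemma sum_fixed_rows:
  assumes "n \<le> N"
  shows "(\<Sum>i=1..d. if i + N < n + d + 1 then (c::real) else 0) = real (n + d - N) * c"
proof -
  have "{i\<in>{1..d}. i + N < n + d + 1} = {1..n + d - N}"
    using d_le assms by auto
  then show ?thesis by (simp add: sum.inter_filter[symmetric])
qed

lemma eq_solutionsI:
  assumes "x \<in> mat_space N d"
    and "\<And>i n. 1 \<le> i \<Longrightarrow> i \<le> d \<Longrightarrow> n \<le> N \<Longrightarrow> n < i \<Longrightarrow> x i n = 0"
    and "\<And>i n. 1 \<le> i \<Longrightarrow> i \<le> d \<Longrightarrow> n \<le> N \<Longrightarrow> i + N < n + d + 1 \<Longrightarrow> x i n = real N"
    and "\<And>n. 0 < n \<Longrightarrow> n < N \<Longrightarrow> (\<Sum>i=1..d. x i n) = real d * real n"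
  shows "x \<in> eq_solutions N d"
proof -
  have "eq_holds N d e x" if e: "e \<in> eq_idx N d" for e
    using e assms(2-4) by (cases e) (auto simp: eq_idx_def)
  then show ?thesis using assms(1) by (simp add: eq_solutions_def)
qed

context
  fixes x assumes x: "x \<in> eq_solutions N d"
begin

lemma eq_solutions_mat_space: "x \<in> mat_space N d"
  using x by (simp add: eq_solutions_def)

lemma eq_solutions_zero: "1 \<le> i \<Longrightarrow> i \<le> d \<Longrightarrow> n \<le> N \<Longrightarrow> n < i \<Longrightarrow> x i n = 0"
  using x E1_mem[of i n] unfolding eq_solutions_def by fastforce

lemma eq_solutions_N: "1 \<le> i \<Longrightarrow> i \<le> d \<Longrightarrow> n \<le> N \<Longrightarrow> i + N < n + d + 1 \<Longrightarrow> x i n = real N"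
  using x E2_mem[of i n] unfolding eq_solutions_def by fastforce

lemma eq_solutions_column_sum: "0 < n \<Longrightarrow> n < N \<Longrightarrow> (\<Sum>i=1..d. x i n) = real d * real n"
  using x E3_mem[of n] unfolding eq_solutions_def by fastforce

lemma free_column_sum:
  assumes n: "0 < n" "n < N"
  shows "(\<Sum>i\<in>{n + d - N<..min n d}. x i n) = real d * real n - real (n + d - N) * real N"
proof -
  have split: "x i n = (if free_entry N d i n then x i n else 0) + (if i + N < n + d + 1 then real N else 0)"
    if "i \<in> {1..d}" for i
    using that n d_le eq_solutions_zero[of i n] eq_solutions_N[of i n]
    by (auto simp: free_entry_def)
  have "real d * real n = (\<Sum>i=1..d. if free_entry N d i n then x i n else 0)
        + (\<Sum>i=1..d. if i + N < n + d + 1 then real N else 0)"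
    unfolding eq_solutions_column_sum[OF n, symmetric] sum.distrib[symmetric]
    by (rule sum.cong) (simp_all add: split)
  then show ?thesis using sum_free_rows[of n "\<lambda>i. x i n"] sum_fixed_rows[of n "real N"] n by simp
qed

lemma eq_solutions_11: "x 1 1 = real d"
proof -
  have "1 + d - N = 0" "min 1 d = 1" "{0<..1::nat} = {1}" using d_le N_ge d_ge by auto
  then show ?thesis using free_column_sum[of 1] N_ge by simp
qed

lemma eq_solutions_d_Nm1: "x d (N-1) = real N - real d"
proof -
  have "N - 1 + d - N = d - 1" "min (N-1) d = d" "{d-1<..d} = {d}" using d_le N_ge d_ge by auto
  then have "x d (N-1) = real d * real (N-1) - real (d-1) * real N"
    using free_column_sum[of "N-1"] N_ge by simp
  then show ?thesis using N_ge d_ge by (simp add: of_nat_diff algebra_simps)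
qed

lemma eq_solutions_column_2: "x 1 2 + x 2 2 = 2 * real d"
proof -
  have "2 + d - N = 0" "min 2 d = 2" "{0<..2::nat} = {1,2}" using d_le N_ge d_ge by auto
  then show ?thesis using free_column_sum[of 2] N_ge by simp
qed

lemma eq_solutions_column_Nm2: "x (d-1) (N-2) + x d (N-2) = 2 * real N - 2 * real d"
proof -
  have "N - 2 + d - N = d - 2" "min (N-2) d = d" "{d-2<..d} = {d-1, d}" "d - 1 \<noteq> d"
    using d_le N_ge d_ge by auto
  then have "x (d-1) (N-2) + x d (N-2) = real d * real (N-2) - real (d-2) * real N"
    using free_column_sum[of "N-2"] N_ge by simp
  then show ?thesis using N_ge d_ge by (simp add: of_nat_diff algebra_simps)
qed

end

end

fun slack :: "nat \<Rightarrow> nat \<Rightarrow> ineq_label \<Rightarrow> mat \<Rightarrow> real" where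
  "slack N d (I4 i n) x = x i (n+1) - x i n"
| "slack N d (I5 i n) x = x (i-1) (n-1) - x i n"
| "slack N d I6 x = x d d"
| "slack N d I7 x = real N - x 1 (N-d)"

fun slack_lin :: "nat \<Rightarrow> nat \<Rightarrow> ineq_label \<Rightarrow> mat \<Rightarrow> real" where
  "slack_lin N d (I4 i n) x = x i (n+1) - x i n"
| "slack_lin N d (I5 i n) x = x (i-1) (n-1) - x i n"
| "slack_lin N d I6 x = x d d"
| "slack_lin N d I7 x = - x 1 (N-d)"

lemma ineq_holds_iff_slack: "ineq_holds N d l x \<longleftrightarrow> 0 \<le> slack N d l x"
  by (cases l) auto

lemma ineq_tight_iff_slack: "ineq_tight N d l x \<longleftrightarrow> slack N d l x = 0"
  by (cases l) auto

lemma reduced_system_iff: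
  "x \<in> reduced_system N d \<longleftrightarrow> x \<in> eq_solutions N d \<and> (\<forall>l\<in>ineq_idx N d. 0 \<le> slack N d l x)"
  by (auto simp: reduced_system_def eq_solutions_def ineq_holds_iff_slack)

lemma I4_mem: "I4 i n \<in> ineq_idx N d \<longleftrightarrow> 1 \<le> i \<and> i \<le> d \<and> i \<le> n \<and> n + d + 1 < N + i
                 \<and> (i, n) \<noteq> (1, 1) \<and> (i, n) \<noteq> (d, N - 2)"
  by (auto simp: ineq_idx_def)

lemma I5_mem: "I5 i n \<in> ineq_idx N d \<longleftrightarrow> 1 < i \<and> i \<le> d \<and> i \<le> n \<and> n + d < N + i
                 \<and> (i, n) \<noteq> (2, 2) \<and> (i, n) \<noteq> (d, N - 1)"
  by (auto simp: ineq_idx_def)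

lemma I6_mem: "I6 \<in> ineq_idx N d" and I7_mem: "I7 \<in> ineq_idx N d"
  by (auto simp: ineq_idx_def)

section \<open>Lambda is the solution set of the reduced system\<close>

context dims begin

lemma Lambda_diag_step:
  assumes x: "x \<in> Lambda N d" and "1 < i" "i \<le> d" "0 < n" "n \<le> N"
  shows "x i n \<le> x (i-1) (n-1)"
  using assms unfolding Lambda_def by blast

lemma Lambda_row_step:
  assumes x: "x \<in> Lambda N d" and "1 \<le> i" "i \<le> d" "n < N"
  shows "x i n \<le> x i (n+1)"
  using assms unfolding Lambda_def by auto

lemma Lambda_row_mono:
  assumes x: "x \<in> Lambda N d" and i: "i \<in> {1..d}" and nm: "n \<le> m" "m \<le> N"
  shows "x i n \<le> x i m"
  using nm
proof (induction m rule: dec_induct)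
  case (step m)
  then show ?case using Lambda_row_step[OF x, of i m] i by auto
qed simp

lemma Lambda_diag_mono:
  assumes x: "x \<in> Lambda N d" and i: "1 \<le> i" "i + t \<le> d" and n: "n + t \<le> N"
  shows "x (i+t) (n+t) \<le> x i n"
  using i n
proof (induction t)
  case 0 then show ?case by simp
next
  case (Suc t)
  have "x (i + Suc t) (n + Suc t) \<le> x (i + Suc t - 1) (n + Suc t - 1)"
    using Lambda_diag_step[OF x, of "i + Suc t" "n + Suc t"] Suc.prems by auto
  also have "\<dots> = x (i+t) (n+t)" by simp
  also have "\<dots> \<le> x i n" using Suc by simp
  finally show ?case .
qed

lemma Lambda_boundary:
  assumes x: "x \<in> Lambda N d"
  shows "\<And>i. i \<in> {1..d} \<Longrightarrow> x i 0 = 0" "\<And>i. i \<in> {1..d} \<Longrightarrow> x i N = real N"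
  using x unfolding Lambda_def by auto

lemma Lambda_zero_below_diagonal:
  assumes x: "x \<in> Lambda N d" and "1 \<le> i" "i \<le> d" "n < i"
  shows "x i n = 0"
proof -
  have "x i n \<ge> x i 0" using Lambda_row_mono[OF x, of i 0 n] assms d_le by auto
  moreover have "x ((i - n) + n) (0 + n) \<le> x (i - n) 0" using Lambda_diag_mono[OF x, of "i-n" n 0] assms d_le by auto
  moreover have "x (i-n) 0 = 0" by (rule Lambda_boundary(1)[OF x]) (use assms in auto)
  moreover have "x i 0 = 0" using Lambda_boundary(1)[OF x, of "i"] assms by auto
  ultimately show ?thesis using assms by auto
qed

lemma Lambda_N_above_antidiagonal:
  assumes x: "x \<in> Lambda N d" and "1 \<le> i" "i \<le> d" "n \<le> N" "i + N < n + d + 1"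
  shows "x i n = real N"
proof -
  have "x i n \<le> x i N" using Lambda_row_mono[OF x, of i n N] assms by auto
  moreover have "x (i + (N - n)) (n + (N - n)) \<le> x i n" using Lambda_diag_mono[OF x, of i "N-n" n] assms by auto
  moreover have "x (i + (N - n)) N = real N" by (rule Lambda_boundary(2)[OF x]) (use assms in auto)
  moreover have "x i N = real N" using Lambda_boundary(2)[OF x, of "i"] assms by auto
  ultimately show ?thesis using assms by auto
qed

lemma Lambda_subset_reduced: "Lambda N d \<subseteq> reduced_system N d"
proof
  fix x assume x: "x \<in> Lambda N d"
  have ms: "x \<in> mat_space N d" using x unfolding Lambda_def by auto
  have eqs: "eq_holds N d e x" if e: "e \<in> eq_idx N d" for e
  proof (cases e)
    case (E1 i n) then show ?thesis using e Lambda_zero_below_diagonal[OF x] by (auto simp: E1_mem)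
  next
    case (E2 i n) then show ?thesis using e Lambda_N_above_antidiagonal[OF x] by (auto simp: E2_mem)
  next
    case (E3 n) then show ?thesis using e x unfolding Lambda_def by (auto simp: E3_mem)
  qed
  have ineqs: "0 \<le> slack N d l x" if l: "l \<in> ineq_idx N d" for l
  proof (cases l)
    case (I4 i n) then show ?thesis using l x unfolding Lambda_def by (auto simp: I4_mem)
  next
    case (I5 i n) then show ?thesis using l x unfolding Lambda_def by (auto simp: I5_mem)
  next
    case I6 then show ?thesis using Lambda_row_mono[OF x, of d 0 d] Lambda_boundary[OF x] d_ge d_le by auto
  next
    case I7 then show ?thesis using Lambda_row_mono[OF x, of 1 "N-d" N] Lambda_boundary[OF x] d_ge d_le by auto
  qed
  show "x \<in> reduced_system N d" using ms eqs ineqs by (simp add: reduced_system_iff eq_solutions_def)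
qed

lemma reduced_eq_solutions: "x \<in> reduced_system N d \<Longrightarrow> x \<in> eq_solutions N d"
  by (simp add: reduced_system_iff)

lemma reduced_slack_nonneg: "x \<in> reduced_system N d \<Longrightarrow> l \<in> ineq_idx N d \<Longrightarrow> 0 \<le> slack N d l x"
  by (simp add: reduced_system_iff)

lemma reduced_I4: "x \<in> reduced_system N d \<Longrightarrow> I4 i n \<in> ineq_idx N d \<Longrightarrow> x i n \<le> x i (n+1)"
  using reduced_slack_nonneg[of x "I4 i n"] by simp

lemma reduced_I5: "x \<in> reduced_system N d \<Longrightarrow> I5 i n \<in> ineq_idx N d \<Longrightarrow> x i n \<le> x (i-1) (n-1)"
  using reduced_slack_nonneg[of x "I5 i n"] by simp

lemma reduced_column_2_bounds:
  assumes x: "x \<in> reduced_system N d"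
  shows "x 2 2 \<le> real d" "real d \<le> x 1 2"
proof -
  have m1: "I4 2 2 \<in> ineq_idx N d" using d_le N_ge d_ge by (auto simp: I4_mem)
  have m2: "I5 2 3 \<in> ineq_idx N d" using d_le N_ge d_ge by (auto simp: I5_mem)
  have "x 2 2 \<le> x 2 (2+1)" using reduced_I4[OF x m1] by simp
  also have "\<dots> \<le> x (2-1) (3-1)" using reduced_I5[OF x m2] by simp
  finally have "x 2 2 \<le> x 1 2" by simp
  then show "x 2 2 \<le> real d" "real d \<le> x 1 2" using eq_solutions_column_2[OF reduced_eq_solutions[OF x]] by auto
qed

lemma reduced_column_Nm2_bounds:
  assumes x: "x \<in> reduced_system N d"
  shows "x d (N-2) \<le> real N - real d" "real N - real d \<le> x (d-1) (N-2)"
proof -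
  have m1: "I5 d (N-2) \<in> ineq_idx N d" using d_le N_ge d_ge by (auto simp: I5_mem)
  have m2: "I4 (d-1) (N-2-1) \<in> ineq_idx N d" using d_le N_ge d_ge by (auto simp: I4_mem)
  have "x d (N-2) \<le> x (d-1) (N-2-1)" using reduced_I5[OF x m1] by simp
  also have "\<dots> \<le> x (d-1) (N-2-1+1)" using reduced_I4[OF x m2] by simp
  also have "N-2-1+1 = N-2" using N_ge by simp
  finally have "x d (N-2) \<le> x (d-1) (N-2)" by simp
  then show "x d (N-2) \<le> real N - real d" "real N - real d \<le> x (d-1) (N-2)"
    using eq_solutions_column_Nm2[OF reduced_eq_solutions[OF x]] by auto
qed

text \<open>Walk left along the row, or down the diagonal at its end, until reaching the entry
  (d,d) bounded by (C6) or one of the entries (1,1), (d,N-1) fixed by the equations.\<close>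

lemma reduced_free_nonneg:
  assumes x: "x \<in> reduced_system N d"
  shows "free_entry N d i n \<Longrightarrow> 0 \<le> x i n"
proof (induction "(d - i) + (n - i)" arbitrary: i n rule: less_induct)
  case less
  note fr = less.prems[unfolded free_entry_def]
  show ?case
  proof (cases "(i,n) = (d,d) \<or> (i,n) = (1,1) \<or> (i,n) = (d,N-1)")
    case True
    then show ?thesis
      using reduced_slack_nonneg[OF x I6_mem] eq_solutions_11[OF reduced_eq_solutions[OF x]]
        eq_solutions_d_Nm1[OF reduced_eq_solutions[OF x]] d_le by auto
  next
    case nb: False
    show ?thesis
    proof (cases "i < n \<and> (i,n) \<noteq> (1,2)")
      case True
      have ms: "(d - i) + (n - 1 - i) < (d - i) + (n - i)" using True fr by arith
      have "free_entry N d i (n-1)" using fr True by (auto simp: free_entry_def)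
      then have "0 \<le> x i (n-1)" using less.hyps[OF ms] by simp
      also have "x i (n-1) \<le> x i (n-1+1)"
      proof (rule reduced_I4[OF x])
        show "I4 i (n-1) \<in> ineq_idx N d" using fr True nb unfolding I4_mem prod.inject by auto
      qed
      finally show ?thesis using True by simp
    next
      case False
      have id: "i < d" using False nb fr d_le N_ge d_ge by auto
      have "0 \<le> x (i+1) (n+1)" using less.hyps[of "i+1" "n+1"] fr id by (auto simp: free_entry_def)
      also have "x (i+1) (n+1) \<le> x (i+1-1) (n+1-1)"
      proof (rule reduced_I5[OF x])
        show "I5 (i+1) (n+1) \<in> ineq_idx N d" using fr id False nb d_le N_ge d_ge unfolding I5_mem prod.inject by auto
      qed
      finally show ?thesis by simp
    qed
  qed
qed

text \<open>Symmetrically, walk right or up the diagonal towards the entry (1,N-d) of (C7).\<close>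

lemma reduced_free_le_N:
  assumes x: "x \<in> reduced_system N d"
  shows "free_entry N d i n \<Longrightarrow> x i n \<le> real N"
proof (induction "i + (N + i - n)" arbitrary: i n rule: less_induct)
  case less
  note fr = less.prems[unfolded free_entry_def]
  show ?case
  proof (cases "(i,n) = (1,N-d) \<or> (i,n) = (1,1) \<or> (i,n) = (d,N-1)")
    case True
    then show ?thesis
      using reduced_slack_nonneg[OF x I7_mem] eq_solutions_11[OF reduced_eq_solutions[OF x]]
        eq_solutions_d_Nm1[OF reduced_eq_solutions[OF x]] d_le by auto
  next
    case nb: False
    show ?thesis
    proof (cases "n + d + 1 < N + i \<and> (i,n) \<noteq> (d,N-2)")
      case True
      have "x i n \<le> x i (n+1)"
      proof (rule reduced_I4[OF x])
        show "I4 i n \<in> ineq_idx N d" using fr True nb unfolding I4_mem prod.inject by auto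
      qed
      also have "x i (n+1) \<le> real N" using less.hyps[of i "n+1"] fr True by (auto simp: free_entry_def)
      finally show ?thesis .
    next
      case False
      have i2: "2 \<le> i" using False nb fr d_le N_ge d_ge by auto
      have h1: "x i n \<le> x (i-1) (n-1)"
      proof (rule reduced_I5[OF x])
        show "I5 i n \<in> ineq_idx N d" using fr i2 False nb d_le N_ge unfolding I5_mem prod.inject by auto
      qed
      have ms: "(i-1) + (N + (i-1) - (n-1)) < i + (N + i - n)" using fr i2 by arith
      have "free_entry N d (i-1) (n-1)" using fr i2 by (auto simp: free_entry_def)
      then have "x (i-1) (n-1) \<le> real N" using less.hyps[OF ms] by simp
      then show ?thesis using h1 by simp
    qed
  qed
qed

lemma reduced_row_mono:
  assumes x: "x \<in> reduced_system N d" and i: "i \<in> {1..d}" and n: "n < N"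
  shows "x i n \<le> x i (n+1)"
proof -
  have A: "x \<in> eq_solutions N d" using reduced_eq_solutions[OF x] .
  consider "n + 1 < i" | "n + 1 = i" | "i \<le> n \<and> n + d + 1 < N + i" | "i \<le> n \<and> n + d + 1 = N + i"
    | "i \<le> n \<and> N + i < n + d + 1" by linarith
  then show ?thesis
  proof cases
    case 1
    have "x i n = 0" by (rule eq_solutions_zero[OF A]) (use i n 1 in auto)
    moreover have "x i (n+1) = 0" by (rule eq_solutions_zero[OF A]) (use i n 1 in auto)
    ultimately show ?thesis by simp
  next
    case 2
    have "x i n = 0" by (rule eq_solutions_zero[OF A]) (use i n 2 in auto)
    moreover have "0 \<le> x i (n+1)"
      by (rule reduced_free_nonneg[OF x]) (use i n 2 d_le N_ge in \<open>auto simp: free_entry_def\<close>)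
    ultimately show ?thesis by simp
  next
    case 3
    consider "(i,n) = (1,1)" | "(i,n) = (d,N-2)" | "(i,n) \<noteq> (1,1) \<and> (i,n) \<noteq> (d,N-2)" by blast
    then show ?thesis
    proof cases
      case 1 then show ?thesis using reduced_column_2_bounds[OF x] eq_solutions_11[OF A] by (auto simp: numeral_2_eq_2)
    next
      case 2
      have "N - 2 + 1 = N - 1" using N_ge by simp
      then show ?thesis using 2 reduced_column_Nm2_bounds[OF x] eq_solutions_d_Nm1[OF A] by auto
    next
      case 3
      have "I4 i n \<in> ineq_idx N d" using 3 i n \<open>i \<le> n \<and> n + d + 1 < N + i\<close>
        unfolding I4_mem prod.inject by auto
      then show ?thesis using reduced_I4[OF x] by blast
    qed
  next
    case 4
    have "x i n \<le> real N" by (rule reduced_free_le_N[OF x]) (use i n 4 in \<open>auto simp: free_entry_def\<close>)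
    moreover have "x i (n+1) = real N" by (rule eq_solutions_N[OF A]) (use i n 4 in auto)
    ultimately show ?thesis by simp
  next
    case 5
    have "x i n = real N" by (rule eq_solutions_N[OF A]) (use i n 5 in auto)
    moreover have "x i (n+1) = real N" by (rule eq_solutions_N[OF A]) (use i n 5 in auto)
    ultimately show ?thesis by simp
  qed
qed

lemma reduced_diag_mono:
  assumes x: "x \<in> reduced_system N d" and i: "1 < i" "i \<le> d" and n: "0 < n" "n \<le> N"
  shows "x i n \<le> x (i-1) (n-1)"
proof -
  have A: "x \<in> eq_solutions N d" using reduced_eq_solutions[OF x] .
  consider "n < i" | "i \<le> n \<and> n + d < N + i" | "i \<le> n \<and> N + i \<le> n + d" by linarith
  then show ?thesis
  proof cases
    case 1
    have "x i n = 0" by (rule eq_solutions_zero[OF A]) (use i n 1 in auto)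
    moreover have "x (i-1) (n-1) = 0" by (rule eq_solutions_zero[OF A]) (use i n 1 in auto)
    ultimately show ?thesis by simp
  next
    case 2
    consider "(i,n) = (2,2)" | "(i,n) = (d,N-1)" | "(i,n) \<noteq> (2,2) \<and> (i,n) \<noteq> (d,N-1)" by blast
    then show ?thesis
    proof cases
      case 1 then show ?thesis using reduced_column_2_bounds[OF x] eq_solutions_11[OF A] by auto
    next
      case 2
      have "N - 1 - 1 = N - 2" by simp
      then show ?thesis using 2 reduced_column_Nm2_bounds[OF x] eq_solutions_d_Nm1[OF A] by auto
    next
      case 3
      have "I5 i n \<in> ineq_idx N d" using 3 i n \<open>i \<le> n \<and> n + d < N + i\<close>
        unfolding I5_mem prod.inject by auto
      then show ?thesis using reduced_I5[OF x] by blast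
    qed
  next
    case 3
    have "x i n = real N" by (rule eq_solutions_N[OF A]) (use i n 3 in auto)
    moreover have "x (i-1) (n-1) = real N" by (rule eq_solutions_N[OF A]) (use i n 3 in auto)
    ultimately show ?thesis by simp
  qed
qed

lemma reduced_subset_Lambda: "reduced_system N d \<subseteq> Lambda N d"
proof
  fix x assume x: "x \<in> reduced_system N d"
  have A: "x \<in> eq_solutions N d" using reduced_eq_solutions[OF x] .
  have v0: "x i 0 = 0" if "i \<in> {1..d}" for i using eq_solutions_zero[OF A, of i 0] that by auto
  have vN: "x i N = real N" if "i \<in> {1..d}" for i using eq_solutions_N[OF A, of i N] that by auto
  have cols: "(\<Sum>i=1..d. x i n) = real d * real n" if nn: "n \<in> {0..N}" for n
  proof -
    consider "n = 0" | "n = N" | "0 < n \<and> n < N" using nn by fastforce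
    then show ?thesis
    proof cases
      case 1 then show ?thesis using v0 by simp
    next
      case 2 then show ?thesis using vN by simp
    next
      case 3 then show ?thesis using eq_solutions_column_sum[OF A] by simp
    qed
  qed
  show "x \<in> Lambda N d"
    unfolding Lambda_def using eq_solutions_mat_space[OF A] v0 vN cols reduced_row_mono[OF x] reduced_diag_mono[OF x]
    by blast
qed

lemma Lambda_eq_reduced: "Lambda N d = reduced_system N d"
  using Lambda_subset_reduced reduced_subset_Lambda by auto

lemma Lambda_iff_slack:
  "x \<in> Lambda N d \<longleftrightarrow> x \<in> eq_solutions N d \<and> (\<forall>l\<in>ineq_idx N d. 0 \<le> slack N d l x)"
  by (simp add: Lambda_eq_reduced reduced_system_iff)

lemma Lambda_subset_eq_solutions: "Lambda N d \<subseteq> eq_solutions N d"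
  by (auto simp: Lambda_iff_slack)

end
section \<open>Directions and slacks\<close>

lemma slack_add: "slack N d l (x + v) = slack N d l x + slack_lin N d l v"
  by (cases l) auto

lemma slack_lin_add: "slack_lin N d l (x + v) = slack_lin N d l x + slack_lin N d l v"
  by (cases l) auto

lemma slack_lin_scale: "slack_lin N d l (mat_scale c v) = c * slack_lin N d l v"
  by (cases l) (auto simp: algebra_simps)

lemma slack_diff: "slack N d l x - slack N d l y = slack_lin N d l (x - y)"
  by (cases l) auto

lemma slack_extrapolate:
  "slack N d l (\<lambda>i n. (1 + t) * x i n - t * y i n) = (1 + t) * slack N d l x - t * slack N d l y"
  by (cases l) (auto simp: algebra_simps)

lemma slack_lin_bound:
  assumes h: "\<And>i n. \<bar>v i n\<bar> \<le> r"
  shows "\<bar>slack_lin N d l v\<bar> \<le> 2 * r"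
proof -
  have "\<bar>v i n - v j m\<bar> \<le> 2 * r" for i n j m
    using h[of i n] h[of j m] by (auto simp: abs_le_iff)
  moreover have "0 \<le> r" using h[of 0 0] by linarith
  ultimately show ?thesis using h[of d d] h[of 1 "N-d"] by (cases l) auto
qed

lemma finite_mat_space_small_multiple:
  assumes B: "finite B" "B \<subseteq> mat_space N d" and r: "0 < r"
  shows "\<exists>e>0. \<forall>b\<in>B. \<forall>i n. \<bar>e * b i n\<bar> \<le> r"
proof -
  define C where "C = 1 + (\<Sum>b\<in>B. \<Sum>(i,n)\<in>idx N d. \<bar>b i n\<bar>)"
  have C: "1 \<le> C" unfolding C_def by (simp add: sum_nonneg split_def)
  have bound: "\<bar>b i n\<bar> \<le> C" if b: "b \<in> B" for b i n
  proof (cases "(i, n) \<in> idx N d")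
    case True
    have "\<bar>b i n\<bar> \<le> (\<Sum>(i,n)\<in>idx N d. \<bar>b i n\<bar>)"
      using member_le_sum[OF True, of "\<lambda>(i,n). \<bar>b i n\<bar>"] by (simp add: split_def idx_def)
    also have "\<dots> \<le> (\<Sum>b\<in>B. \<Sum>(i,n)\<in>idx N d. \<bar>b i n\<bar>)"
      using member_le_sum[OF b, of "\<lambda>b. \<Sum>(i,n)\<in>idx N d. \<bar>b i n\<bar>"] B(1)
      by (simp add: sum_nonneg split_def)
    finally show ?thesis unfolding C_def by simp
  next
    case False
    then show ?thesis using b B(2) C by (auto simp: mat_space_def)
  qed
  have "\<bar>r / C * b i n\<bar> \<le> r" if "b \<in> B" for b i n
  proof -
    have "\<bar>r / C * b i n\<bar> = r / C * \<bar>b i n\<bar>" using r C by (simp add: abs_mult)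
    also have "\<dots> \<le> r / C * C" using bound[OF that] r C by (intro mult_left_mono) auto
    finally show ?thesis using C by simp
  qed
  then show ?thesis using r C by (intro exI[of _ "r / C"]) auto
qed

context dims begin

lemma subspace_eq_directions: "matv.subspace (eq_directions N d)"
  unfolding matv.subspace_def eq_directions_def
  by (auto simp: sum.distrib sum_distrib_left[symmetric])

lemma eq_directions_subset_mat_space: "eq_directions N d \<subseteq> mat_space N d"
  using free_entry_idx by (fastforce simp: eq_directions_def mat_space_def)

lemma eq_solutions_diff:
  assumes x: "x \<in> eq_solutions N d" and y: "y \<in> eq_solutions N d"
  shows "x - y \<in> eq_directions N d"
proof -
  have "(x - y) i n = 0" if nf: "\<not> free_entry N d i n" for i n
  proof (cases "(i, n) \<in> idx N d")
    case False
    then show ?thesis using eq_solutions_mat_space[OF x] eq_solutions_mat_space[OF y]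
      by (simp add: mat_space_def)
  next
    case True
    then have i: "1 \<le> i" "i \<le> d" "n \<le> N" by (auto simp: idx_def)
    then consider "n < i" | "i + N < n + d + 1" using nf by (auto simp: free_entry_def)
    then show ?thesis
      by cases (use eq_solutions_zero[OF x] eq_solutions_zero[OF y]
          eq_solutions_N[OF x] eq_solutions_N[OF y] i in simp_all)
  qed
  moreover have "(\<Sum>i=1..d. (x - y) i n) = 0" if "0 < n" "n < N" for n
    using eq_solutions_column_sum[OF x] eq_solutions_column_sum[OF y] that by (simp add: sum_subtractf)
  ultimately show ?thesis by (simp add: eq_directions_def)
qed

lemma eq_solutions_add_direction:
  assumes x: "x \<in> eq_solutions N d" and v: "v \<in> eq_directions N d"
  shows "x + v \<in> eq_solutions N d"
proof (rule eq_solutionsI)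
  have vz: "v i n = 0" if "\<not> free_entry N d i n" for i n using v that by (simp add: eq_directions_def)
  show "x + v \<in> mat_space N d"
    using eq_solutions_mat_space[OF x] vz free_entry_idx by (fastforce simp: mat_space_def)
  show "(x + v) i n = 0" if "1 \<le> i" "i \<le> d" "n \<le> N" "n < i" for i n
    using eq_solutions_zero[OF x] vz[of i n] that by (simp add: free_entry_def)
  show "(x + v) i n = real N" if "1 \<le> i" "i \<le> d" "n \<le> N" "i + N < n + d + 1" for i n
    using eq_solutions_N[OF x] vz[of i n] that by (simp add: free_entry_def)
  show "(\<Sum>i=1..d. (x + v) i n) = real d * real n" if "0 < n" "n < N" for n
    using eq_solutions_column_sum[OF x] v that by (simp add: sum.distrib eq_directions_def)
qed

lemma eq_solutions_extrapolate:
  assumes x: "x \<in> eq_solutions N d" and y: "y \<in> eq_solutions N d"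
  shows "(\<lambda>i n. (1 + t) * x i n - t * y i n) \<in> eq_solutions N d"
proof -
  have "(\<lambda>i n. (1 + t) * x i n - t * y i n) = x + mat_scale t (x - y)"
    by (simp add: fun_eq_iff algebra_simps)
  moreover have "mat_scale t (x - y) \<in> eq_directions N d"
    using subspace_eq_directions eq_solutions_diff[OF x y] unfolding matv.subspace_def by blast
  ultimately show ?thesis using eq_solutions_add_direction[OF x] by simp
qed

lemma slack_nonneg_near:
  assumes r: "\<And>i n. \<bar>z i n - y i n\<bar> \<le> r" and s: "2 * r \<le> slack N d l y"
  shows "0 \<le> slack N d l z"
  using slack_diff[of N d l z y] slack_lin_bound[of "z - y" r N d l] r s by simp

end

section \<open>A point with unit slack\<close>

definition unit_slack_point :: "nat \<Rightarrow> nat \<Rightarrow> mat" where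
  "unit_slack_point N d = (\<lambda>i n. if free_entry N d i n then real n + real d + 1 - 2 * real i
     else if 1 \<le> i \<and> i \<le> d \<and> n \<le> N \<and> i + N < n + d + 1 then real N else 0)"

context dims begin

lemma unit_slack_point_eq_solutions: "unit_slack_point N d \<in> eq_solutions N d"
proof (rule eq_solutionsI)
  show "unit_slack_point N d \<in> mat_space N d"
    by (auto simp: mat_space_def unit_slack_point_def idx_def free_entry_def)
  show "unit_slack_point N d i n = 0" if "1 \<le> i" "i \<le> d" "n \<le> N" "n < i" for i n
    using that d_le N_ge by (auto simp: unit_slack_point_def free_entry_def)
  show "unit_slack_point N d i n = real N" if "1 \<le> i" "i \<le> d" "n \<le> N" "i + N < n + d + 1" for i n
    using that by (auto simp: unit_slack_point_def free_entry_def)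
  show "(\<Sum>i=1..d. unit_slack_point N d i n) = real d * real n" if n: "0 < n" "n < N" for n
  proof -
    have split: "unit_slack_point N d i n =
        (if free_entry N d i n then real n + real d + 1 - 2 * real i else 0)
        + (if i + N < n + d + 1 then real N else 0)" if "i \<in> {1..d}" for i
      using that n by (auto simp: unit_slack_point_def free_entry_def)
    have "(\<Sum>i=1..d. unit_slack_point N d i n)
        = (\<Sum>i\<in>{n + d - N<..min n d}. (real n + real d + 1) - 2 * real i) + real (n + d - N) * real N"
      using n sum_free_rows[of n "\<lambda>i. real n + real d + 1 - 2 * real i"] sum_fixed_rows[of n "real N"]
      by (simp add: split sum.distrib)
    also have "\<dots> = real (min n d - (n + d - N)) * (real n + real d + 1 - real (n + d - N) - real (min n d) - 1)
        + real (n + d - N) * real N"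
      using d_le n by (subst sum_greaterThanAtMost_linear) auto
    also have "\<dots> = real d * real n"
      using n d_le by (cases "n + d \<le> N"; cases "n \<le> d") (auto simp: min_def of_nat_diff algebra_simps)
    finally show ?thesis .
  qed
qed

lemma slack_unit_slack_point:
  assumes l: "l \<in> ineq_idx N d"
  shows "slack N d l (unit_slack_point N d) = 1"
proof (cases l)
  case (I4 i n)
  then have "free_entry N d i n" "free_entry N d i (n+1)" using l by (auto simp: I4_mem free_entry_def)
  then show ?thesis using I4 by (simp add: unit_slack_point_def)
next
  case (I5 i n)
  then have "free_entry N d i n" "free_entry N d (i-1) (n-1)" "1 < i" "i \<le> n"
    using l by (auto simp: I5_mem free_entry_def)
  then show ?thesis using I5 by (simp add: unit_slack_point_def of_nat_diff)
next
  case I6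
  have "free_entry N d d d" using d_le d_ge by (auto simp: free_entry_def)
  then show ?thesis using I6 by (simp add: unit_slack_point_def)
next
  case I7
  have "free_entry N d 1 (N-d)" using d_le d_ge by (auto simp: free_entry_def)
  then show ?thesis using I7 d_le N_ge by (simp add: unit_slack_point_def of_nat_diff)
qed

lemma unit_slack_point_Lambda: "unit_slack_point N d \<in> Lambda N d"
  using unit_slack_point_eq_solutions slack_unit_slack_point
  by (simp add: Lambda_eq_reduced reduced_system_iff)

end

section \<open>Points on a single facet\<close>

definition tight_only_at :: "nat \<Rightarrow> nat \<Rightarrow> ineq_label \<Rightarrow> mat \<Rightarrow> bool" where
  "tight_only_at N d l q \<longleftrightarrow> q \<in> eq_solutions N d \<and> slack N d l q = 0
     \<and> (\<forall>l'\<in>ineq_idx N d. l' \<noteq> l \<longrightarrow> 1/2 \<le> slack N d l' q)"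

text \<open>Moves a unit from u to c within one column and from c' to r within another.\<close>

definition double_transfer :: "nat \<times> nat \<Rightarrow> nat \<times> nat \<Rightarrow> nat \<times> nat \<Rightarrow> nat \<times> nat \<Rightarrow> mat" where
  "double_transfer c u r c' = (\<lambda>i n. unit_mat c i n - unit_mat u i n + unit_mat r i n - unit_mat c' i n)"

lemma double_transfer_values:
  assumes "c \<noteq> r" "u \<noteq> c'" "c \<noteq> c'" "c \<noteq> u" "r \<noteq> c'" "r \<noteq> u"
  shows "-1 \<le> double_transfer c u r c' i n" "double_transfer c u r c' i n \<le> 1"
    "(i, n) \<notin> {c', u} \<Longrightarrow> 0 \<le> double_transfer c u r c' i n"
    "(i, n) \<notin> {c, r} \<Longrightarrow> double_transfer c u r c' i n \<le> 0"
    "(i, n) = c \<Longrightarrow> double_transfer c u r c' i n = 1"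
    "(i, n) = c' \<Longrightarrow> double_transfer c u r c' i n = -1"
  using assms by (auto simp: double_transfer_def unit_mat_def)

lemma double_transfer_increment:
  assumes "c \<noteq> r" "u \<noteq> c'" "c \<noteq> c'" "c \<noteq> u" "r \<noteq> c'" "r \<noteq> u"
    and "\<not> ((a1, a2) \<in> {c, r} \<and> (b1, b2) \<in> {c', u})"
  shows "-1 \<le> double_transfer c u r c' b1 b2 - double_transfer c u r c' a1 a2"
  using assms(7) double_transfer_values[OF assms(1-6), of b1 b2]
    double_transfer_values[OF assms(1-6), of a1 a2] by (cases "(a1, a2) \<in> {c, r}") auto

lemma unit_mat_column_sum:
  "(\<Sum>i=1..d. unit_mat (a, b) i n) = (if b = n \<and> 1 \<le> a \<and> a \<le> d then 1 else 0)"
  by (auto simp: unit_mat_def sum.delta)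

definition column_tilt :: "nat \<Rightarrow> nat \<Rightarrow> mat" where
  "column_tilt N d = (\<lambda>i n. if free_entry N d i n then real (n + d - N) + 1 + real (min n d) - 2 * real i else 0)"

context dims begin

lemma tight_only_atI:
  assumes l: "l \<in> ineq_idx N d" and v: "v \<in> eq_directions N d" and vl: "slack_lin N d l v = -2"
    and vo: "\<And>l'. l' \<in> ineq_idx N d \<Longrightarrow> l' \<noteq> l \<Longrightarrow> -1 \<le> slack_lin N d l' v"
  shows "\<exists>q. tight_only_at N d l q"
proof -
  let ?q = "unit_slack_point N d + mat_scale (1/2) v"
  have "mat_scale (1/2) v \<in> eq_directions N d"
    using subspace_eq_directions v unfolding matv.subspace_def by blast
  then have "?q \<in> eq_solutions N d"
    by (rule eq_solutions_add_direction[OF unit_slack_point_eq_solutions])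
  moreover have "slack N d l ?q = 0"
    using slack_unit_slack_point[OF l] vl by (simp add: slack_add slack_lin_scale)
  moreover have "1/2 \<le> slack N d l' ?q" if "l' \<in> ineq_idx N d" "l' \<noteq> l" for l'
    using slack_unit_slack_point[OF that(1)] vo[OF that] by (simp add: slack_add slack_lin_scale)
  ultimately show ?thesis unfolding tight_only_at_def by blast
qed

lemma unit_mat_diff_direction:
  assumes "free_entry N d a1 b" "free_entry N d a2 b"
  shows "unit_mat (a1, b) - unit_mat (a2, b) \<in> eq_directions N d"
proof -
  have "\<not> free_entry N d i n \<Longrightarrow> (unit_mat (a1, b) - unit_mat (a2, b)) i n = 0" for i n
    using assms by (auto simp: unit_mat_def)
  moreover have "(\<Sum>i=1..d. (unit_mat (a1, b) - unit_mat (a2, b)) i n) = 0" for n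
    using assms unit_mat_column_sum[of a1 b n] unit_mat_column_sum[of a2 b n]
    by (simp add: sum_subtractf free_entry_def)
  ultimately show ?thesis by (simp add: eq_directions_def)
qed

lemma double_transfer_direction:
  assumes "free_entry N d c1 n1" "free_entry N d u1 n1" "free_entry N d r1 n2" "free_entry N d c'1 n2"
  shows "double_transfer (c1, n1) (u1, n1) (r1, n2) (c'1, n2) \<in> eq_directions N d"
proof -
  have "double_transfer (c1, n1) (u1, n1) (r1, n2) (c'1, n2)
      = (unit_mat (c1, n1) - unit_mat (u1, n1)) + (unit_mat (r1, n2) - unit_mat (c'1, n2))"
    by (simp add: fun_eq_iff double_transfer_def)
  then show ?thesis
    using subspace_eq_directions unit_mat_diff_direction[OF assms(1,2)]
      unit_mat_diff_direction[OF assms(3,4)]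
    unfolding matv.subspace_def by simp
qed

text \<open>The transfer lowers the slack of l by 2 and, since no other kept inequality compares an
  entry of {c, r} with an entry of {c', u}, lowers no other slack by more than 1.\<close>

lemma tight_point_double_transfer:
  assumes f: "free_entry N d c1 n1" "free_entry N d u1 n1" "free_entry N d r1 n2" "free_entry N d c'1 n2"
    and dist: "(c1, n1) \<noteq> (r1, n2)" "(u1, n1) \<noteq> (c'1, n2)" "(c1, n1) \<noteq> (c'1, n2)"
      "(c1, n1) \<noteq> (u1, n1)" "(r1, n2) \<noteq> (c'1, n2)" "(r1, n2) \<noteq> (u1, n1)"
    and l: "l \<in> ineq_idx N d"
    and vl: "slack_lin N d l (double_transfer (c1, n1) (u1, n1) (r1, n2) (c'1, n2)) = -2"
    and no4: "\<And>i' n'. I4 i' n' \<in> ineq_idx N d \<Longrightarrow> I4 i' n' \<noteq> l \<Longrightarrow>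
       \<not> ((i', n') \<in> {(c1, n1), (r1, n2)} \<and> (i', n'+1) \<in> {(c'1, n2), (u1, n1)})"
    and no5: "\<And>i' n'. I5 i' n' \<in> ineq_idx N d \<Longrightarrow> I5 i' n' \<noteq> l \<Longrightarrow>
       \<not> ((i', n') \<in> {(c1, n1), (r1, n2)} \<and> (i'-1, n'-1) \<in> {(c'1, n2), (u1, n1)})"
  shows "\<exists>q. tight_only_at N d l q"
proof (rule tight_only_atI[OF l double_transfer_direction[OF f] vl])
  fix l' assume l': "l' \<in> ineq_idx N d" "l' \<noteq> l"
  show "-1 \<le> slack_lin N d l' (double_transfer (c1, n1) (u1, n1) (r1, n2) (c'1, n2))"
  proof (cases l')
    case (I4 i' n')
    then show ?thesis using double_transfer_increment[OF dist, of i' n' i' "n'+1"] no4[of i' n'] l' by auto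
  next
    case (I5 i' n')
    then show ?thesis using double_transfer_increment[OF dist, of i' n' "i'-1" "n'-1"] no5[of i' n'] l' by auto
  next
    case I6
    then show ?thesis using double_transfer_values(1)[OF dist, of d d] by simp
  next
    case I7
    then show ?thesis using double_transfer_values(2)[OF dist, of 1 "N-d"] by simp
  qed
qed

lemma tight_point_I4:
  assumes l: "I4 i n \<in> ineq_idx N d"
  shows "\<exists>q. tight_only_at N d (I4 i n) q"
proof -
  have m: "1 \<le> i" "i \<le> d" "i \<le> n" "n + d + 1 < N + i" "(i, n) \<noteq> (1, 1)" "(i, n) \<noteq> (d, N - 2)"
    using l by (auto simp: I4_mem)
  define ui where "ui = (if i = 1 then 2 else i - 1)"
  define ri where "ri = (if i = d then d - 1 else i + 1)"
  have f: "free_entry N d i n" "free_entry N d ui n" "free_entry N d ri (n+1)" "free_entry N d i (n+1)"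
    using m d_ge d_le by (auto simp: free_entry_def ui_def ri_def)
  have dist: "(i, n) \<noteq> (ri, n+1)" "(ui, n) \<noteq> (i, n+1)" "(i, n) \<noteq> (i, n+1)" "(i, n) \<noteq> (ui, n)"
    "(ri, n+1) \<noteq> (i, n+1)" "(ri, n+1) \<noteq> (ui, n)"
    using m d_ge by (auto simp: ui_def ri_def)
  have key: "ri - 1 \<noteq> ui" using m d_ge by (auto simp: ri_def ui_def)
  show ?thesis
  proof (rule tight_point_double_transfer[OF f dist l])
    show "slack_lin N d (I4 i n) (double_transfer (i, n) (ui, n) (ri, n + 1) (i, n + 1)) = -2"
      using double_transfer_values(5,6)[OF dist] by simp
    show "\<not> ((i', n') \<in> {(i, n), (ri, n+1)} \<and> (i', n'+1) \<in> {(i, n+1), (ui, n)})"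
      if "I4 i' n' \<in> ineq_idx N d" "I4 i' n' \<noteq> I4 i n" for i' n'
      using that by auto
    show "\<not> ((i', n') \<in> {(i, n), (ri, n+1)} \<and> (i'-1, n'-1) \<in> {(i, n+1), (ui, n)})"
      if "I5 i' n' \<in> ineq_idx N d" "I5 i' n' \<noteq> I4 i n" for i' n'
      using that m key by auto
  qed
qed

lemma tight_point_I5:
  assumes l: "I5 i n \<in> ineq_idx N d"
  shows "\<exists>q. tight_only_at N d (I5 i n) q"
proof -
  have m: "1 < i" "i \<le> d" "i \<le> n" "n + d < N + i" "(i, n) \<noteq> (2, 2)" "(i, n) \<noteq> (d, N - 1)"
    using l by (auto simp: I5_mem)
  define ui where "ui = (if n + d + 1 = N + i then i + 1 else i - 1)"
  define ri where "ri = (if n = i then i - 2 else i)"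
  have f: "free_entry N d i n" "free_entry N d ui n" "free_entry N d ri (n-1)" "free_entry N d (i-1) (n-1)"
    using m d_ge d_le by (auto simp: free_entry_def ui_def ri_def)
  have dist: "(i, n) \<noteq> (ri, n-1)" "(ui, n) \<noteq> (i-1, n-1)" "(i, n) \<noteq> (i-1, n-1)" "(i, n) \<noteq> (ui, n)"
    "(ri, n-1) \<noteq> (i-1, n-1)" "(ri, n-1) \<noteq> (ui, n)"
    using m d_ge by (auto simp: ui_def ri_def)
  have key: "ri \<noteq> ui" and n2: "2 \<le> n" using m d_ge by (auto simp: ri_def ui_def)
  show ?thesis
  proof (rule tight_point_double_transfer[OF f dist l])
    show "slack_lin N d (I5 i n) (double_transfer (i, n) (ui, n) (ri, n - 1) (i - 1, n - 1)) = -2"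
      using double_transfer_values(5,6)[OF dist] by simp
    show "\<not> ((i', n') \<in> {(i, n), (ri, n-1)} \<and> (i', n'+1) \<in> {(i-1, n-1), (ui, n)})"
      if "I4 i' n' \<in> ineq_idx N d" "I4 i' n' \<noteq> I5 i n" for i' n'
      using that n2 key by auto
    show "\<not> ((i', n') \<in> {(i, n), (ri, n-1)} \<and> (i'-1, n'-1) \<in> {(i-1, n-1), (ui, n)})"
      if "I5 i' n' \<in> ineq_idx N d" "I5 i' n' \<noteq> I5 i n" for i' n'
      using that n2 key by auto
  qed
qed

definition tilt_size :: real where
  "tilt_size = real (min d (N - d)) - 1"

lemma tilt_size_ge: "1 \<le> tilt_size"
  using d_ge d_le by (simp add: tilt_size_def)

lemma column_tilt_direction: "column_tilt N d \<in> eq_directions N d"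
proof -
  have "(\<Sum>i=1..d. column_tilt N d i n) = 0" if n: "0 < n" "n < N" for n
  proof -
    have "(\<Sum>i=1..d. column_tilt N d i n)
        = (\<Sum>i\<in>{n + d - N<..min n d}. (real (n + d - N) + 1 + real (min n d)) - 2 * real i)"
      unfolding column_tilt_def using sum_free_rows by simp
    also have "\<dots> = 0" using d_le n by (subst sum_greaterThanAtMost_linear) auto
    finally show ?thesis .
  qed
  then show ?thesis by (auto simp: eq_directions_def column_tilt_def)
qed

lemma column_tilt_dd: "column_tilt N d d d = - tilt_size"
proof -
  have "free_entry N d d d" using d_le d_ge by (auto simp: free_entry_def)
  then show ?thesis
    using d_le by (cases "d + d \<le> N") (auto simp: column_tilt_def tilt_size_def min_def of_nat_diff)
qed

lemma column_tilt_1: "column_tilt N d 1 (N - d) = tilt_size"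
proof -
  have "free_entry N d 1 (N - d)" using d_le d_ge by (auto simp: free_entry_def)
  then show ?thesis using d_le by (simp add: column_tilt_def tilt_size_def min_def)
qed

lemma slack_lin_column_tilt_nonneg:
  assumes l: "l \<in> ineq_idx N d" "l \<noteq> I6" "l \<noteq> I7"
  shows "0 \<le> slack_lin N d l (column_tilt N d)"
proof (cases l)
  case (I4 i n)
  then have "free_entry N d i n" "free_entry N d i (n+1)" using l by (auto simp: I4_mem free_entry_def)
  moreover have "real (n + d - N) \<le> real (n + 1 + d - N)" "real (min n d) \<le> real (min (n+1) d)"
    by auto
  ultimately show ?thesis using I4 by (simp add: column_tilt_def)
next
  case (I5 i n)
  then have m: "1 < i" "i \<le> d" "i \<le> n" "n + d < N + i" using l by (auto simp: I5_mem)
  then have "free_entry N d i n" "free_entry N d (i-1) (n-1)" by (auto simp: free_entry_def)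
  moreover have "real (n + d - N) \<le> real (n - 1 + d - N) + 1" "real (min n d) \<le> real (min (n - 1) d) + 1"
    using m by linarith+
  ultimately show ?thesis using I5 m by (simp add: column_tilt_def of_nat_diff)
qed (use l in auto)

text \<open>The tilt lowers the slacks of both (C6) and (C7) and lowers no other slack; a unit
  transfer within one column then restores the slack of whichever of the two is to stay slack.\<close>

lemma tight_point_column_tilt:
  assumes l: "l = I6 \<or> l = I7" and a: "free_entry N d a1 b" and b: "free_entry N d a2 b"
    and ab: "a1 \<noteq> a2"
    and vl: "slack_lin N d l (unit_mat (a1, b) - unit_mat (a2, b)) = 0"
    and vo: "\<And>l'. (l' = I6 \<or> l' = I7) \<Longrightarrow> l' \<noteq> l \<Longrightarrow> slack_lin N d l' (unit_mat (a1, b) - unit_mat (a2, b)) = 1"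
    and no4: "\<And>i' n'. \<not> ((i', n') = (a1, b) \<and> (i', n'+1) = (a2, b))"
    and no5: "\<And>i' n'. \<not> ((i', n') = (a1, b) \<and> (i'-1, n'-1) = (a2, b))"
  shows "\<exists>q. tight_only_at N d l q"
proof -
  let ?z = "unit_mat (a1, b) - unit_mat (a2, b)"
  let ?v = "mat_scale (2 / tilt_size) (column_tilt N d) + ?z"
  have tilt: "1 \<le> tilt_size" by (rule tilt_size_ge)
  have v: "?v \<in> eq_directions N d"
    using subspace_eq_directions column_tilt_direction unit_mat_diff_direction[OF a b]
    unfolding matv.subspace_def by blast
  have lI: "l \<in> ineq_idx N d" using l by (auto simp: ineq_idx_def)
  have tilt_67: "slack_lin N d l' (column_tilt N d) = - tilt_size" if "l' = I6 \<or> l' = I7" for l'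
    using that column_tilt_dd column_tilt_1 by auto
  show ?thesis
  proof (rule tight_only_atI[OF lI v])
    show "slack_lin N d l ?v = -2" using tilt_67[OF l] vl tilt by (simp add: slack_lin_add slack_lin_scale)
    fix l' assume l': "l' \<in> ineq_idx N d" "l' \<noteq> l"
    show "-1 \<le> slack_lin N d l' ?v"
    proof (cases "l' = I6 \<or> l' = I7")
      case True
      then show ?thesis using tilt_67[OF True] vo[OF True l'(2)] tilt by (simp add: slack_lin_add slack_lin_scale)
    next
      case False
      have "0 \<le> slack_lin N d l' (column_tilt N d)" using slack_lin_column_tilt_nonneg l' False by auto
      then have "0 \<le> (2 / tilt_size) * slack_lin N d l' (column_tilt N d)" using tilt by simp
      moreover have "-1 \<le> slack_lin N d l' ?z"
        using False ab no4 no5 by (cases l') (auto simp: unit_mat_def)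
      ultimately show ?thesis by (simp add: slack_lin_add slack_lin_scale)
    qed
  qed
qed

lemma tight_point_I6: "\<exists>q. tight_only_at N d I6 q"
proof (rule tight_point_column_tilt)
  show "free_entry N d 2 (N - d)" "free_entry N d 1 (N - d)" using d_ge d_le by (auto simp: free_entry_def)
  show "slack_lin N d I6 (unit_mat (2, N - d) - unit_mat (1, N - d)) = 0"
    using d_ge d_le N_ge by (auto simp: unit_mat_def)
  show "slack_lin N d l' (unit_mat (2, N - d) - unit_mat (1, N - d)) = 1" if "l' = I6 \<or> l' = I7" "l' \<noteq> I6" for l'
    using that d_ge d_le by (auto simp: unit_mat_def)
qed (use d_ge d_le in auto)

lemma tight_point_I7: "\<exists>q. tight_only_at N d I7 q"
proof (rule tight_point_column_tilt)
  show "free_entry N d d d" "free_entry N d (d-1) d" using d_ge d_le by (auto simp: free_entry_def)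
  show "slack_lin N d I7 (unit_mat (d, d) - unit_mat (d - 1, d)) = 0"
    using d_ge d_le N_ge by (auto simp: unit_mat_def)
  show "slack_lin N d l' (unit_mat (d, d) - unit_mat (d - 1, d)) = 1" if "l' = I6 \<or> l' = I7" "l' \<noteq> I7" for l'
    using that d_ge by (auto simp: unit_mat_def)
  show "d \<noteq> d - 1" using d_ge by simp
qed (use d_ge in auto)

lemma tight_point_exists: "l \<in> ineq_idx N d \<Longrightarrow> \<exists>q. tight_only_at N d l q"
  using tight_point_I4 tight_point_I5 tight_point_I6 tight_point_I7 by (cases l) auto

end

section \<open>The equations are independent and cut out the affine hull\<close>

lemma eq_idx_finite: "finite (eq_idx N d)"
proof -
  have "eq_idx N d \<subseteq> (\<lambda>(i,n). E1 i n) ` ({0..d} \<times> {0..N}) \<union> (\<lambda>(i,n). E2 i n) ` ({0..d} \<times> {0..N})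
      \<union> E3 ` {0..N}"
    by (auto simp: eq_idx_def)
  then show ?thesis by (rule finite_subset) auto
qed

lemma eq_coeff_split: "eq_coeff N d e i n = (if e = E1 i n then 1 else 0) + (if e = E2 i n then 1 else 0)
    + (if 1 \<le> i \<and> i \<le> d then (if e = E3 n then 1 else 0) else 0)"
  by (cases e) auto

lemma sum_eq_coeff:
  "(\<Sum>e\<in>eq_idx N d. c e * eq_coeff N d e i n) =
     (if E1 i n \<in> eq_idx N d then c (E1 i n) else 0) + (if E2 i n \<in> eq_idx N d then c (E2 i n) else 0)
     + (if 1 \<le> i \<and> i \<le> d then (if E3 n \<in> eq_idx N d then c (E3 n) else 0) else 0)"
proof -
  have "(\<Sum>e\<in>eq_idx N d. c e * eq_coeff N d e i n) =
      (\<Sum>e\<in>eq_idx N d. (if e = E1 i n then c e else 0) + (if e = E2 i n then c e else 0)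
         + (if 1 \<le> i \<and> i \<le> d then (if e = E3 n then c e else 0) else 0))"
    by (rule sum.cong) (auto simp: eq_coeff_split)
  also have "\<dots> = (\<Sum>e\<in>eq_idx N d. if e = E1 i n then c e else 0) + (\<Sum>e\<in>eq_idx N d. if e = E2 i n then c e else 0)
         + (if 1 \<le> i \<and> i \<le> d then (\<Sum>e\<in>eq_idx N d. if e = E3 n then c e else 0) else 0)"
  proof (cases "1 \<le> i \<and> i \<le> d")
    case False
    then have "(1 \<le> i \<and> i \<le> d) = False" by simp
    then show ?thesis by (simp only:) (simp add: sum.distrib)
  qed (simp add: sum.distrib)
  finally show ?thesis by (simp add: sum.delta eq_idx_finite)
qed

context dims begin

text \<open>Every inner column contains a free entry, which occurs only in (C3); so the coefficients
  of (C3) vanish, and then each remaining equation is the only one involving its entry.\<close>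

lemma eqs_lin_indep_holds: "eqs_lin_indep N d"
  unfolding eqs_lin_indep_def
proof (intro allI impI ballI)
  fix c :: "eq_label \<Rightarrow> real" and e
  assume H: "\<forall>i n. (\<Sum>e\<in>eq_idx N d. c e * eq_coeff N d e i n) = 0" and e: "e \<in> eq_idx N d"
  have S: "(if E1 i n \<in> eq_idx N d then c (E1 i n) else 0) + (if E2 i n \<in> eq_idx N d then c (E2 i n) else 0)
     + (if E3 n \<in> eq_idx N d then c (E3 n) else 0) = 0" if "1 \<le> i" "i \<le> d" for i n
    using H[rule_format, of i n] that by (simp add: sum_eq_coeff)
  have c3: "c (E3 n) = 0" if "E3 n \<in> eq_idx N d" for n
  proof -
    have n: "0 < n" "n < N" using that E3_mem by auto
    define i0 where "i0 = (if N < n + d + 1 then n + d + 1 - N else 1)"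
    have i0: "1 \<le> i0" "i0 \<le> d" "E1 i0 n \<notin> eq_idx N d" "E2 i0 n \<notin> eq_idx N d"
      using n d_le d_ge by (auto simp: i0_def E1_mem E2_mem)
    show ?thesis using S[OF i0(1,2), of n] i0(3,4) that by simp
  qed
  show "c e = 0"
  proof (cases e)
    case (E1 i n)
    then have m: "1 \<le> i" "i \<le> d" "n \<le> N" "n < i" using e by (auto simp: E1_mem)
    have "E2 i n \<notin> eq_idx N d" using m d_le by (auto simp: E2_mem)
    then show ?thesis using S[OF m(1,2), of n] e E1 c3[of n] by (auto split: if_splits)
  next
    case (E2 i n)
    then have m: "1 \<le> i" "i \<le> d" "n \<le> N" "i + N < n + d + 1" using e by (auto simp: E2_mem)
    have "E1 i n \<notin> eq_idx N d" using m d_le by (auto simp: E1_mem)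
    then show ?thesis using S[OF m(1,2), of n] e E2 c3[of n] by (auto split: if_splits)
  next
    case (E3 n) then show ?thesis using c3 e by simp
  qed
qed

lemma mat_affine_hull_subset_eq_solutions:
  assumes S: "S \<subseteq> eq_solutions N d"
  shows "mat_affine_hull S \<subseteq> eq_solutions N d"
proof
  fix x assume "x \<in> mat_affine_hull S"
  then obtain T u where T: "finite T" "T \<subseteq> S" "sum u T = 1"
    and x: "\<And>i n. x i n = (\<Sum>y\<in>T. u y * y i n)"
    unfolding mat_affine_hull_def by blast
  have TA: "y \<in> eq_solutions N d" if "y \<in> T" for y using T(2) S that by auto
  show "x \<in> eq_solutions N d"
  proof (rule eq_solutionsI)
    show "x \<in> mat_space N d"
      using TA eq_solutions_mat_space by (auto simp: mat_space_def x intro!: sum.neutral)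
    show "x i n = 0" if "1 \<le> i" "i \<le> d" "n \<le> N" "n < i" for i n
      unfolding x using eq_solutions_zero[OF TA that] by (auto intro!: sum.neutral)
    show "x i n = real N" if "1 \<le> i" "i \<le> d" "n \<le> N" "i + N < n + d + 1" for i n
    proof -
      have "(\<Sum>y\<in>T. u y * y i n) = (\<Sum>y\<in>T. u y * real N)"
        by (rule sum.cong) (use eq_solutions_N[OF TA that] in auto)
      then show ?thesis using T(3) by (simp add: x sum_distrib_right[symmetric])
    qed
    show "(\<Sum>i=1..d. x i n) = real d * real n" if "0 < n" "n < N" for n
    proof -
      have "(\<Sum>i=1..d. x i n) = (\<Sum>y\<in>T. u y * (\<Sum>i=1..d. y i n))"
        by (simp add: x sum_distrib_left sum.swap[of _ T])
      also have "\<dots> = (\<Sum>y\<in>T. u y * (real d * real n))" using eq_solutions_column_sum[OF TA that] by simp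
      also have "\<dots> = real d * real n" using T(3) by (simp add: sum_distrib_right[symmetric])
      finally show ?thesis .
    qed
  qed
qed

lemma Lambda_near_unit_slack_point:
  assumes y: "y \<in> eq_solutions N d" and near: "\<And>i n. \<bar>y i n - unit_slack_point N d i n\<bar> \<le> 1/2"
  shows "y \<in> Lambda N d"
  using y slack_nonneg_near[OF near] slack_unit_slack_point by (simp add: Lambda_iff_slack)

lemma eq_solutions_subset_affine_hull: "eq_solutions N d \<subseteq> mat_affine_hull (Lambda N d)"
proof
  fix x assume x: "x \<in> eq_solutions N d"
  let ?p = "unit_slack_point N d"
  obtain e where e: "0 < e" "\<And>i n. \<bar>e * (x - ?p) i n\<bar> \<le> 1/2"
    using finite_mat_space_small_multiple[of "{x - ?p}" N d "1/2"]
      eq_solutions_diff[OF x unit_slack_point_eq_solutions] eq_directions_subset_mat_space by auto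
  define y where "y = ?p + mat_scale e (x - ?p)"
  have "mat_scale e (x - ?p) \<in> eq_directions N d"
    using subspace_eq_directions eq_solutions_diff[OF x unit_slack_point_eq_solutions]
    unfolding matv.subspace_def by blast
  then have "y \<in> eq_solutions N d"
    unfolding y_def by (rule eq_solutions_add_direction[OF unit_slack_point_eq_solutions])
  then have y_Lambda: "y \<in> Lambda N d"
    by (rule Lambda_near_unit_slack_point) (use e in \<open>simp add: y_def\<close>)
  show "x \<in> mat_affine_hull (Lambda N d)"
  proof (cases "y = ?p")
    case True
    then have "x = ?p" using e(1) by (simp add: y_def fun_eq_iff)
    then show ?thesis unfolding mat_affine_hull_def
      by (intro CollectI exI[of _ "{?p}"] exI[of _ "\<lambda>_. 1"]) (use unit_slack_point_Lambda in auto)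
  next
    case False
    show ?thesis unfolding mat_affine_hull_def
    proof (intro CollectI exI[of _ "{y, ?p}"] exI[of _ "\<lambda>z. if z = y then 1/e else 1 - 1/e"] conjI allI)
      show "{y, ?p} \<subseteq> Lambda N d" using y_Lambda unit_slack_point_Lambda by simp
      show "(\<Sum>z\<in>{y, ?p}. if z = y then 1/e else 1 - 1/e) = 1" using False by simp
      show "x i n = (\<Sum>z\<in>{y, ?p}. (if z = y then 1/e else 1 - 1/e) * z i n)" for i n
        using False e(1) by (simp add: y_def field_simps)
    qed auto
  qed
qed

lemma affine_hull_Lambda: "mat_affine_hull (Lambda N d) = eq_solutions N d"
  using mat_affine_hull_subset_eq_solutions[OF Lambda_subset_eq_solutions]
    eq_solutions_subset_affine_hull by blast

text \<open>Extrapolating from the unit slack point through a point tight only at l violates l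
  alone.\<close>

lemma ineq_irredundant:
  assumes l: "l \<in> ineq_idx N d"
  shows "\<exists>x\<in>mat_space N d. (\<forall>e\<in>eq_idx N d. eq_holds N d e x)
         \<and> (\<forall>l'\<in>ineq_idx N d - {l}. ineq_holds N d l' x) \<and> \<not> ineq_holds N d l x"
proof -
  obtain q where q: "tight_only_at N d l q" using tight_point_exists[OF l] by blast
  define z where "z = (\<lambda>i n. (1 + 1) * q i n - 1 * unit_slack_point N d i n)"
  have z: "z \<in> eq_solutions N d"
    using q unfolding z_def tight_only_at_def by (intro eq_solutions_extrapolate unit_slack_point_eq_solutions) auto
  have slack_z: "slack N d l' z = 2 * slack N d l' q - slack N d l' (unit_slack_point N d)" for l'
    unfolding z_def slack_extrapolate by simp
  show ?thesis
    using z q slack_z slack_unit_slack_point l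
    by (auto simp: eq_solutions_def tight_only_at_def ineq_holds_iff_slack intro!: bexI[of _ z])
qed

end

section \<open>Facets\<close>

definition mat_lin :: "nat \<Rightarrow> nat \<Rightarrow> mat \<Rightarrow> mat \<Rightarrow> real" where
  "mat_lin N d a x = (\<Sum>(i,n)\<in>idx N d. a i n * x i n)"

lemma mat_lin_add: "mat_lin N d a (x + y) = mat_lin N d a x + mat_lin N d a y"
  by (simp add: mat_lin_def split_def distrib_left sum.distrib)

lemma mat_lin_scale: "mat_lin N d a (mat_scale c x) = c * mat_lin N d a x"
  by (simp add: mat_lin_def split_def sum_distrib_left algebra_simps)

lemma mat_lin_diff: "mat_lin N d a (x - y) = mat_lin N d a x - mat_lin N d a y"
  by (simp add: mat_lin_def split_def right_diff_distrib sum_subtractf)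

lemma mat_lin_extrapolate:
  "mat_lin N d a (\<lambda>i n. (1 + t) * x i n - t * y i n) = (1 + t) * mat_lin N d a x - t * mat_lin N d a y"
  by (simp add: mat_lin_def split_def right_diff_distrib sum_subtractf sum_distrib_left algebra_simps)

lemma mat_lin_unit_mat: "mat_lin N d (unit_mat c) x = (if c \<in> idx N d then x (fst c) (snd c) else 0)"
proof -
  have "mat_lin N d (unit_mat c) x = (\<Sum>p\<in>idx N d. if p = c then x (fst c) (snd c) else 0)"
    unfolding mat_lin_def by (rule sum.cong) (auto simp: unit_mat_def)
  then show ?thesis by (simp add: sum.delta' idx_def)
qed

lemma mat_lin_diff_left: "mat_lin N d (a - b) x = mat_lin N d a x - mat_lin N d b x"
  by (simp add: mat_lin_def split_def left_diff_distrib sum_subtractf)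

lemma mat_lin_uminus_left: "mat_lin N d (- a) x = - mat_lin N d a x"
  by (simp add: mat_lin_def split_def sum_negf)

lemma mat_lin_average:
  assumes "finite I"
  shows "mat_lin N d a (\<lambda>i n. (\<Sum>j\<in>I. X j i n) / real (card I))
    = (\<Sum>j\<in>I. mat_lin N d a (X j)) / real (card I)"
  unfolding mat_lin_def
  by (simp add: split_def sum_divide_distrib[symmetric] sum_distrib_left sum.swap[of _ I] mult.assoc)

lemma slack_average:
  assumes I: "finite I" "I \<noteq> {}"
  shows "slack N d l (\<lambda>i n. (\<Sum>j\<in>I. X j i n) / real (card I))
    = (\<Sum>j\<in>I. slack N d l (X j)) / real (card I)"
proof (cases l)
  case I7
  have "(\<Sum>j\<in>I. real N - X j 1 (N - d)) = real (card I) * real N - (\<Sum>j\<in>I. X j 1 (N - d))"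
    by (simp add: sum_subtractf)
  then show ?thesis using I7 I by (simp add: field_simps card_gt_0_iff)
qed (auto simp: diff_divide_distrib sum_subtractf)

definition ineq_face :: "nat \<Rightarrow> nat \<Rightarrow> ineq_label \<Rightarrow> mat set" where
  "ineq_face N d l = {x \<in> Lambda N d. ineq_tight N d l x}"

definition face_directions :: "nat \<Rightarrow> nat \<Rightarrow> ineq_label \<Rightarrow> mat set" where
  "face_directions N d l = eq_directions N d \<inter> {v. slack_lin N d l v = 0}"

lemma ineq_idx_finite: "finite (ineq_idx N d)"
proof -
  have "ineq_idx N d \<subseteq> (\<lambda>(i,n). I4 i n) ` ({0..d} \<times> {0..N}) \<union> (\<lambda>(i,n). I5 i n) ` ({0..d} \<times> {0..N})
      \<union> {I6, I7}"
    by (auto simp: ineq_idx_def)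
  then show ?thesis by (rule finite_subset) auto
qed

context dims begin

lemma eq_solutions_average:
  assumes I: "finite I" "I \<noteq> {}" and X: "\<forall>j\<in>I. X j \<in> eq_solutions N d"
  shows "(\<lambda>i n. (\<Sum>j\<in>I. X j i n) / real (card I)) \<in> eq_solutions N d"
proof -
  have cI: "0 < real (card I)" using I by (simp add: card_gt_0_iff)
  show ?thesis
  proof (rule eq_solutionsI)
    show "(\<lambda>i n. (\<Sum>j\<in>I. X j i n) / real (card I)) \<in> mat_space N d"
      using X eq_solutions_mat_space by (auto simp: mat_space_def intro!: sum.neutral)
    show "(\<Sum>j\<in>I. X j i n) / real (card I) = 0" if "1 \<le> i" "i \<le> d" "n \<le> N" "n < i" for i n
      using X eq_solutions_zero[OF _ that] by (auto intro!: sum.neutral)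
    show "(\<Sum>j\<in>I. X j i n) / real (card I) = real N" if "1 \<le> i" "i \<le> d" "n \<le> N" "i + N < n + d + 1" for i n
    proof -
      have "(\<Sum>j\<in>I. X j i n) = (\<Sum>j\<in>I. real N)" by (rule sum.cong) (use X eq_solutions_N[OF _ that] in auto)
      then show ?thesis using cI by simp
    qed
    show "(\<Sum>i=1..d. (\<Sum>j\<in>I. X j i n) / real (card I)) = real d * real n" if "0 < n" "n < N" for n
    proof -
      have "(\<Sum>i=1..d. (\<Sum>j\<in>I. X j i n) / real (card I)) = (\<Sum>j\<in>I. \<Sum>i=1..d. X j i n) / real (card I)"
        by (simp add: sum_divide_distrib[symmetric] sum.swap[of _ I])
      also have "\<dots> = (\<Sum>j\<in>I. real d * real n) / real (card I)"
        using X eq_solutions_column_sum[OF _ that] by simp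
      also have "\<dots> = real d * real n" using cI by simp
      finally show ?thesis .
    qed
  qed
qed

lemma eq_directions_span_unit_mats: "eq_directions N d \<subseteq> matv.span (unit_mat ` idx N d)"
proof
  fix v assume v: "v \<in> eq_directions N d"
  have "(\<Sum>c\<in>idx N d. mat_scale (v (fst c) (snd c)) (unit_mat c)) = v"
  proof (intro ext)
    fix i n
    have "(\<Sum>c\<in>idx N d. mat_scale (v (fst c) (snd c)) (unit_mat c)) i n
        = (\<Sum>c\<in>idx N d. if c = (i, n) then v i n else 0)"
      unfolding sum_mat_apply by (rule sum.cong) (auto simp: unit_mat_def)
    also have "\<dots> = v i n"
      using v eq_directions_subset_mat_space by (auto simp: sum.delta' idx_def mat_space_def)
    finally show "(\<Sum>c\<in>idx N d. mat_scale (v (fst c) (snd c)) (unit_mat c)) i n = v i n" .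
  qed
  moreover have "(\<Sum>c\<in>idx N d. mat_scale (v (fst c) (snd c)) (unit_mat c)) \<in> matv.span (unit_mat ` idx N d)"
    by (intro matv.span_sum matv.span_scale matv.span_base) auto
  ultimately show "v \<in> matv.span (unit_mat ` idx N d)" by simp
qed

lemma finite_basis_eq_directions: "\<exists>B. finite_basis B (eq_directions N d)"
proof -
  obtain B where B: "B \<subseteq> eq_directions N d" "matv.independent B" "eq_directions N d \<subseteq> matv.span B"
    using matv.maximal_independent_subset[of "eq_directions N d"] by blast
  have "finite (unit_mat ` idx N d)" by (simp add: idx_def)
  then have "finite B"
    using matv.independent_span_bound[OF _ B(2)] B(1) eq_directions_span_unit_mats by blast
  then show ?thesis using B by (auto simp: finite_basis_def)
qed

lemma finite_basis_small_multiple: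
  assumes "finite_basis B U" "U \<subseteq> eq_directions N d" "0 < r"
  shows "\<exists>e>0. \<forall>b\<in>B. \<forall>i n. \<bar>e * b i n\<bar> \<le> r"
  using finite_mat_space_small_multiple[of B N d r] eq_directions_subset_mat_space assms
  by (auto simp: finite_basis_def)

lemma mat_aff_dim_Lambda:
  assumes B: "finite_basis B (eq_directions N d)"
  shows "mat_aff_dim (Lambda N d) = int (card B)"
proof -
  let ?p = "unit_slack_point N d"
  obtain e where e: "0 < e" "\<forall>b\<in>B. \<forall>i n. \<bar>e * b i n\<bar> \<le> 1/2"
    using finite_basis_small_multiple[OF B order_refl, of "1/2"] by auto
  show ?thesis
  proof (rule mat_aff_dim_eqI[OF B _ unit_slack_point_Lambda])
    show "\<forall>y\<in>Lambda N d. y - ?p \<in> eq_directions N d"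
      using eq_solutions_diff Lambda_subset_eq_solutions unit_slack_point_eq_solutions by blast
    show "e \<noteq> 0" using e by simp
    show "\<forall>b\<in>B. ?p + mat_scale e b \<in> Lambda N d"
    proof
      fix b assume b: "b \<in> B"
      have "mat_scale e b \<in> eq_directions N d"
        using subspace_eq_directions b B unfolding matv.subspace_def finite_basis_def by blast
      then show "?p + mat_scale e b \<in> Lambda N d"
        using e b by (intro Lambda_near_unit_slack_point eq_solutions_add_direction unit_slack_point_eq_solutions)
          auto
    qed
  qed
qed

lemma ineq_face_iff:
  "x \<in> ineq_face N d l \<longleftrightarrow> x \<in> Lambda N d \<and> slack N d l x = 0"
  by (simp add: ineq_face_def ineq_tight_iff_slack)

lemma tight_only_at_ineq_face:
  assumes q: "tight_only_at N d l q"
  shows "q \<in> ineq_face N d l"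
proof -
  have "0 \<le> slack N d l' q" if "l' \<in> ineq_idx N d" for l'
    using q that unfolding tight_only_at_def by (cases "l' = l") auto
  then show ?thesis using q by (simp add: ineq_face_iff Lambda_eq_reduced reduced_system_iff tight_only_at_def)
qed

lemma ineq_face_near_tight_point:
  assumes q: "tight_only_at N d l q" and y: "y \<in> eq_solutions N d" "slack N d l y = 0"
    and near: "\<And>i n. \<bar>y i n - q i n\<bar> \<le> 1/4"
  shows "y \<in> ineq_face N d l"
proof -
  have "0 \<le> slack N d l' y" if "l' \<in> ineq_idx N d" for l'
    using q that y(2) slack_nonneg_near[OF near, of l'] unfolding tight_only_at_def by (cases "l' = l") auto
  then show ?thesis using y by (simp add: ineq_face_iff Lambda_eq_reduced reduced_system_iff)
qed

lemma subspace_face_directions: "matv.subspace (face_directions N d l)"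
  unfolding face_directions_def
  by (rule subspace_kernel[OF subspace_eq_directions slack_lin_add slack_lin_scale])

lemma ineq_face_diff:
  assumes "x \<in> ineq_face N d l" "y \<in> ineq_face N d l"
  shows "x - y \<in> face_directions N d l"
  using assms eq_solutions_diff Lambda_subset_eq_solutions slack_diff[of N d l x y]
  by (auto simp: ineq_face_iff face_directions_def)

lemma finite_basis_face_directions:
  assumes B: "finite_basis B (eq_directions N d)" and l: "l \<in> ineq_idx N d"
  shows "\<exists>Bl. finite_basis Bl (face_directions N d l) \<and> card Bl + 1 = card B"
proof -
  obtain q where q: "tight_only_at N d l q" using tight_point_exists[OF l] by blast
  let ?u = "q - unit_slack_point N d"
  have "?u \<in> eq_directions N d"
    using q eq_solutions_diff unit_slack_point_eq_solutions by (auto simp: tight_only_at_def)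
  moreover have "slack_lin N d l ?u = -1"
    using q slack_diff[of N d l q "unit_slack_point N d"] slack_unit_slack_point[OF l]
    by (simp add: tight_only_at_def)
  ultimately show ?thesis
    unfolding face_directions_def
    by (intro finite_basis_kernel[OF B subspace_eq_directions slack_lin_add slack_lin_scale]) auto
qed

lemma mat_aff_dim_ineq_face:
  assumes Bl: "finite_basis Bl (face_directions N d l)" and l: "l \<in> ineq_idx N d"
  shows "mat_aff_dim (ineq_face N d l) = int (card Bl)"
proof -
  obtain q where q: "tight_only_at N d l q" using tight_point_exists[OF l] by blast
  have "face_directions N d l \<subseteq> eq_directions N d" by (auto simp: face_directions_def)
  then obtain e where e: "0 < e" "\<forall>b\<in>Bl. \<forall>i n. \<bar>e * b i n\<bar> \<le> 1/4"
    using finite_basis_small_multiple[OF Bl, of "1/4"] by auto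
  show ?thesis
  proof (rule mat_aff_dim_eqI[OF Bl _ tight_only_at_ineq_face[OF q]])
    show "\<forall>y\<in>ineq_face N d l. y - q \<in> face_directions N d l"
      using ineq_face_diff tight_only_at_ineq_face[OF q] by blast
    show "e \<noteq> 0" using e by simp
    show "\<forall>b\<in>Bl. q + mat_scale e b \<in> ineq_face N d l"
    proof
      fix b assume b: "b \<in> Bl"
      then have "mat_scale e b \<in> face_directions N d l"
        using subspace_face_directions Bl unfolding matv.subspace_def finite_basis_def by blast
      then show "q + mat_scale e b \<in> ineq_face N d l"
        using q e b
        by (intro ineq_face_near_tight_point eq_solutions_add_direction)
          (auto simp: tight_only_at_def face_directions_def slack_add)
    qed
  qed
qed

lemma slack_as_mat_lin:
  assumes l: "l \<in> ineq_idx N d"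
  shows "\<exists>a \<beta>. \<forall>x. mat_lin N d a x = \<beta> - slack N d l x"
proof (cases l)
  case (I4 i n)
  then have "(i, n) \<in> idx N d" "(i, n+1) \<in> idx N d"
    using l by (auto simp: I4_mem idx_def)
  then show ?thesis
    using I4 by (intro exI[of _ "unit_mat (i, n) - unit_mat (i, n+1)"] exI[of _ 0])
      (simp add: mat_lin_diff_left mat_lin_unit_mat)
next
  case (I5 i n)
  then have "(i, n) \<in> idx N d" "(i-1, n-1) \<in> idx N d"
    using l by (auto simp: I5_mem idx_def)
  then show ?thesis
    using I5 by (intro exI[of _ "unit_mat (i, n) - unit_mat (i-1, n-1)"] exI[of _ 0])
      (simp add: mat_lin_diff_left mat_lin_unit_mat)
next
  case I6
  have "(d, d) \<in> idx N d" using d_ge d_le by (simp add: idx_def)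
  then show ?thesis
    using I6 by (intro exI[of _ "- unit_mat (d, d)"] exI[of _ 0]) (simp add: mat_lin_uminus_left mat_lin_unit_mat)
next
  case I7
  have "(1, N - d) \<in> idx N d" using d_ge d_le by (simp add: idx_def)
  then show ?thesis
    using I7 by (intro exI[of _ "unit_mat (1, N - d)"] exI[of _ "real N"]) (simp add: mat_lin_unit_mat)
qed

lemma ineq_face_is_face:
  assumes l: "l \<in> ineq_idx N d"
  shows "mat_face_of N d (ineq_face N d l) (Lambda N d)"
proof -
  obtain a \<beta> where ab: "\<forall>x. mat_lin N d a x = \<beta> - slack N d l x" using slack_as_mat_lin[OF l] by blast
  have "\<forall>x\<in>Lambda N d. mat_lin N d a x \<le> \<beta>"
    using ab l by (auto simp: Lambda_eq_reduced reduced_system_iff)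
  moreover have "ineq_face N d l = {x \<in> Lambda N d. mat_lin N d a x = \<beta>}"
    using ab by (auto simp: ineq_face_iff)
  ultimately show ?thesis unfolding mat_face_of_def mat_lin_def[symmetric] by blast
qed

lemma ineq_face_is_facet:
  assumes B: "finite_basis B (eq_directions N d)" and l: "l \<in> ineq_idx N d"
  shows "mat_facet_of N d (ineq_face N d l) (Lambda N d)"
proof -
  obtain Bl where Bl: "finite_basis Bl (face_directions N d l)" "card Bl + 1 = card B"
    using finite_basis_face_directions[OF B l] by blast
  have "ineq_face N d l \<noteq> {}" using tight_point_exists[OF l] tight_only_at_ineq_face by blast
  then show ?thesis
    using ineq_face_is_face[OF l] mat_aff_dim_ineq_face[OF Bl(1) l] mat_aff_dim_Lambda[OF B] Bl(2)
    by (simp add: mat_facet_of_def)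
qed

text \<open>Were every inequality slack somewhere on the slice, the average of such points would be
  slack in all of them, and extrapolating from y through it would leave the half-space.\<close>

lemma supporting_slice_tight_at_ineq:
  assumes valid: "\<forall>x\<in>Lambda N d. mat_lin N d a x \<le> \<beta>"
    and y: "y \<in> Lambda N d" "mat_lin N d a y < \<beta>"
  shows "\<exists>l\<in>ineq_idx N d. \<forall>x\<in>Lambda N d. mat_lin N d a x = \<beta> \<longrightarrow> slack N d l x = 0"
proof (rule ccontr)
  let ?I = "ineq_idx N d"
  assume "\<not> ?thesis"
  then have "\<forall>l\<in>?I. \<exists>x\<in>Lambda N d. mat_lin N d a x = \<beta> \<and> slack N d l x \<noteq> 0" by blast
  then obtain X where X: "\<forall>l\<in>?I. X l \<in> Lambda N d \<and> mat_lin N d a (X l) = \<beta> \<and> slack N d l (X l) \<noteq> 0"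
    by metis
  have finI: "finite ?I" by (rule ineq_idx_finite)
  have neI: "?I \<noteq> {}" using I6_mem by blast
  have cI: "0 < real (card ?I)" using finI neI by (simp add: card_gt_0_iff)
  define xa where "xa = (\<lambda>i n. (\<Sum>j\<in>?I. X j i n) / real (card ?I))"
  have xa: "xa \<in> eq_solutions N d"
    unfolding xa_def using X Lambda_subset_eq_solutions by (intro eq_solutions_average[OF finI neI]) auto
  have slack_xa: "0 < slack N d l xa" if l: "l \<in> ?I" for l
  proof -
    have nonneg: "\<forall>j\<in>?I. 0 \<le> slack N d l (X j)" using X l by (auto simp: Lambda_iff_slack)
    then have "slack N d l (X l) \<le> (\<Sum>j\<in>?I. slack N d l (X j))"
      using l finI by (intro member_le_sum) auto
    moreover have "0 < slack N d l (X l)" using X nonneg l by (metis order_le_less)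
    ultimately show ?thesis using cI by (simp add: xa_def slack_average[OF finI neI])
  qed
  have "mat_lin N d a xa = (\<Sum>j\<in>?I. \<beta>) / real (card ?I)"
    unfolding xa_def mat_lin_average[OF finI] using X by simp
  then have a_xa: "mat_lin N d a xa = \<beta>" using cI by simp
  obtain t where t: "0 < t" "\<forall>l\<in>?I. 0 \<le> (1 + t) * slack N d l xa - t * slack N d l y"
    using exists_small_extrapolation[OF finI, of "\<lambda>l. slack N d l xa" "\<lambda>l. slack N d l y"] slack_xa by blast
  define z where "z = (\<lambda>i n. (1 + t) * xa i n - t * y i n)"
  have "z \<in> Lambda N d"
    using t(2) eq_solutions_extrapolate[OF xa] Lambda_subset_eq_solutions y(1)
    by (auto simp: Lambda_iff_slack z_def slack_extrapolate)
  moreover have "mat_lin N d a z = (1 + t) * \<beta> - t * mat_lin N d a y"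
    unfolding z_def mat_lin_extrapolate a_xa ..
  moreover have "\<dots> > \<beta>" using t(1) y(2) by (simp add: algebra_simps)
  ultimately show False using valid by force
qed

lemma ineq_face_subset_supporting_slice:
  assumes valid: "\<forall>x\<in>Lambda N d. mat_lin N d a x \<le> \<beta>"
    and q: "tight_only_at N d l q" and a_q: "mat_lin N d a q = \<beta>"
  shows "ineq_face N d l \<subseteq> {x \<in> Lambda N d. mat_lin N d a x = \<beta>}"
proof
  fix x assume "x \<in> ineq_face N d l"
  then have x: "x \<in> Lambda N d" "slack N d l x = 0" by (auto simp: ineq_face_iff)
  have "\<forall>l'\<in>ineq_idx N d - {l}. 0 < slack N d l' q"
    using q by (auto simp: tight_only_at_def)
  then obtain t where t: "0 < t"
    "\<forall>l'\<in>ineq_idx N d - {l}. 0 \<le> (1 + t) * slack N d l' q - t * slack N d l' x"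
    using exists_small_extrapolation[of "ineq_idx N d - {l}" "\<lambda>l'. slack N d l' q" "\<lambda>l'. slack N d l' x"]
      ineq_idx_finite by auto
  define z where "z = (\<lambda>i n. (1 + t) * q i n - t * x i n)"
  have "0 \<le> slack N d l' z" if "l' \<in> ineq_idx N d" for l'
  proof (cases "l' = l")
    case True
    then show ?thesis using q x(2) by (simp add: z_def slack_extrapolate tight_only_at_def)
  next
    case False
    then show ?thesis using t(2) that by (simp add: z_def slack_extrapolate)
  qed
  moreover have "z \<in> eq_solutions N d"
    using q x(1) Lambda_subset_eq_solutions unfolding z_def tight_only_at_def
    by (intro eq_solutions_extrapolate) auto
  ultimately have "z \<in> Lambda N d" by (simp add: Lambda_iff_slack)
  moreover have "mat_lin N d a z = (1 + t) * \<beta> - t * mat_lin N d a x"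
    unfolding z_def mat_lin_extrapolate a_q ..
  ultimately have "(1 + t) * \<beta> - t * mat_lin N d a x \<le> \<beta>" using valid by metis
  then have "\<beta> \<le> mat_lin N d a x" using t(1) by (simp add: algebra_simps)
  moreover have "mat_lin N d a x \<le> \<beta>" using valid x(1) by blast
  ultimately show "x \<in> {x \<in> Lambda N d. mat_lin N d a x = \<beta>}" using x(1) by simp
qed

lemma mat_aff_dim_ineq_face_slice:
  assumes Bl: "finite_basis Bl (face_directions N d l)"
    and f0: "f0 \<in> ineq_face N d l" "mat_lin N d a f0 = \<beta>"
    and q: "q \<in> ineq_face N d l" "mat_lin N d a q \<noteq> \<beta>"
  shows "mat_aff_dim {x \<in> ineq_face N d l. mat_lin N d a x = \<beta>} \<le> int (card Bl) - 1"
proof -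
  have "q - f0 \<in> face_directions N d l" "mat_lin N d a (q - f0) \<noteq> 0"
    using ineq_face_diff[OF q(1) f0(1)] q(2) f0(2) by (auto simp: mat_lin_diff)
  then obtain B' where B': "finite_basis B' (face_directions N d l \<inter> {v. mat_lin N d a v = 0})"
    "card B' + 1 = card Bl"
    using finite_basis_kernel[where f = "mat_lin N d a", OF Bl subspace_face_directions mat_lin_add mat_lin_scale]
    by blast
  have "\<forall>x\<in>{x \<in> ineq_face N d l. mat_lin N d a x = \<beta>}. x - f0 \<in> face_directions N d l \<inter> {v. mat_lin N d a v = 0}"
    using ineq_face_diff[OF _ f0(1)] f0(2) by (auto simp: mat_lin_diff)
  then have "mat_aff_dim {x \<in> ineq_face N d l. mat_lin N d a x = \<beta>} \<le> int (card B')"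
    using f0 by (intro mat_aff_dim_le[OF B'(1)]) auto
  then show ?thesis using B'(2) by simp
qed

lemma facet_eq_ineq_face:
  assumes B: "finite_basis B (eq_directions N d)" and F: "mat_facet_of N d F (Lambda N d)"
  shows "\<exists>l\<in>ineq_idx N d. F = ineq_face N d l"
proof -
  obtain a \<beta> where valid: "\<forall>x\<in>Lambda N d. mat_lin N d a x \<le> \<beta>"
    and F_eq: "F = {x \<in> Lambda N d. mat_lin N d a x = \<beta>}"
    using F unfolding mat_facet_of_def mat_face_of_def mat_lin_def[symmetric] by blast
  have F_ne: "F \<noteq> {}" and F_dim: "mat_aff_dim F = int (card B) - 1"
    using F mat_aff_dim_Lambda[OF B] unfolding mat_facet_of_def by auto
  have "F \<noteq> Lambda N d" using F_dim mat_aff_dim_Lambda[OF B] by auto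
  then obtain y where y: "y \<in> Lambda N d" "mat_lin N d a y < \<beta>"
    using valid F_eq by force
  obtain l where l: "l \<in> ineq_idx N d"
    and tight: "\<forall>x\<in>Lambda N d. mat_lin N d a x = \<beta> \<longrightarrow> slack N d l x = 0"
    using supporting_slice_tight_at_ineq[OF valid y] by blast
  have F_slice: "F = {x \<in> ineq_face N d l. mat_lin N d a x = \<beta>}"
    using F_eq tight by (auto simp: ineq_face_iff)
  obtain q where q: "tight_only_at N d l q" using tight_point_exists[OF l] by blast
  show ?thesis
  proof (cases "mat_lin N d a q = \<beta>")
    case True
    then have "ineq_face N d l \<subseteq> F"
      using ineq_face_subset_supporting_slice[OF valid q] F_eq by blast
    then show ?thesis using F_slice l by blast
  next
    case False
    obtain Bl where Bl: "finite_basis Bl (face_directions N d l)" "card Bl + 1 = card B"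
      using finite_basis_face_directions[OF B l] by blast
    obtain f0 where "f0 \<in> F" using F_ne by blast
    then have "mat_aff_dim F \<le> int (card Bl) - 1"
      unfolding F_slice by (intro mat_aff_dim_ineq_face_slice[OF Bl(1) _ _ tight_only_at_ineq_face[OF q] False]) auto
    then show ?thesis using F_dim Bl(2) by simp
  qed
qed

lemma inj_on_ineq_face: "inj_on (ineq_face N d) (ineq_idx N d)"
proof (rule inj_onI)
  fix l1 l2 assume l: "l1 \<in> ineq_idx N d" "l2 \<in> ineq_idx N d" and eq: "ineq_face N d l1 = ineq_face N d l2"
  obtain q where q: "tight_only_at N d l1 q" using tight_point_exists[OF l(1)] by blast
  then have "slack N d l2 q = 0" using eq tight_only_at_ineq_face[OF q] by (auto simp: ineq_face_iff)
  then show "l1 = l2" using q l(2) by (force simp: tight_only_at_def)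
qed

lemma facets_bij:
  "bij_betw (\<lambda>l. {x \<in> Lambda N d. ineq_tight N d l x}) (ineq_idx N d) {F. mat_facet_of N d F (Lambda N d)}"
proof -
  obtain B where B: "finite_basis B (eq_directions N d)" using finite_basis_eq_directions by blast
  have faces: "(\<lambda>l. {x \<in> Lambda N d. ineq_tight N d l x}) = ineq_face N d"
    by (simp add: fun_eq_iff ineq_face_def)
  have "ineq_face N d ` ineq_idx N d = {F. mat_facet_of N d F (Lambda N d)}"
    using ineq_face_is_facet[OF B] facet_eq_ineq_face[OF B] by blast
  then show ?thesis unfolding faces bij_betw_def using inj_on_ineq_face by blast
qed

end

theorem mainTheorem9:
  fixes N d :: nat
  assumes "5 \<le> N" and "2 \<le> d" and "d \<le> N - 2"
  shows "Lambda N d = reduced_system N d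
    \<and> eqs_lin_indep N d
    \<and> mat_affine_hull (Lambda N d) =
           {x \<in> mat_space N d. \<forall>e\<in>eq_idx N d. eq_holds N d e x}
    \<and> (\<forall>l\<in>ineq_idx N d. \<exists>x\<in>mat_space N d.
           (\<forall>e\<in>eq_idx N d. eq_holds N d e x)
         \<and> (\<forall>l'\<in>ineq_idx N d - {l}. ineq_holds N d l' x)
         \<and> \<not> ineq_holds N d l x)
    \<and> bij_betw (\<lambda>l. {x \<in> Lambda N d. ineq_tight N d l x})
           (ineq_idx N d) {F. mat_facet_of N d F (Lambda N d)}"
proof -
  interpret dims N d using assms by unfold_locales
  show ?thesis
    using Lambda_eq_reduced eqs_lin_indep_holds affine_hull_Lambda ineq_irredundant facets_bij
    unfolding eq_solutions_def by blast
qed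

end
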